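(* Let $\Lambda$ be a row-finite $k$-graph with no sources and $R$ a commutative ring with $1$. For $(\alpha,\beta)\in\Lambda\times\Lambda$ with $s(\alpha)=s(\beta)$, the following are equivalent: (1) $s_{\alpha\gamma}s_{(\alpha\gamma)^*}=s_{\beta\gamma}s_{(\beta\gamma)^*}$ for all $\gamma\in s(\alpha)\Lambda$; (2) $s_\alpha s_{\beta^*}$ is normal (i.e. $aa^*=a^*a$ for $a=s_\alpha s_{\beta^*}$) and commutes with every element of $\mathcal{D}$; (3) $\alpha\gamma=\beta\gamma$ for all $\gamma\in s(\alpha)\Lambda^\infty$.
   Context: A $k$-graph is a countable category $\Lambda$ (objects $\Lambda^0$, vertices; morphisms, paths; range/source maps $r,s$) with a degree functor $d:\Lambda\to\mathbb{N}^k$ satisfying unique factorization: if $d(\lambda)=m+n$ there are unique $\mu,\nu$ with $s(\mu)=r(\nu)$, $d(\mu)=m$, $d(\nu)=n$, $\lambda=\mu\nu$. $\Lambda^n=d^{-1}(n)$, $v\Lambda=\{\lambda:r(\lambda)=v\}$, $v\Lambda^n=v\Lambda\cap\Lambda^n$. Row-finite with no sources: each $v\Lambda^n$ is finite and nonempty. ${\rm KP}_R(\Lambda)$ is the universal $R$-algebra generated by $p_v$ ($v\in\Lambda^0$) and $s_\lambda,s_{\lambda^*}$ ($d(\lambda)\neq0$) with relations (KP1) $p_v$ mutually orthogonal idempotents; (KP2) $s_\lambda s_\mu=s_{\lambda\mu}$, $s_{\mu^*}s_{\lambda^*}=s_{(\lambda\mu)^*}$, $p_{r(\lambda)}s_\lambda=s_\lambda=s_\lambda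 p_{s(\lambda)}$, $p_{s(\lambda)}s_{\lambda^*}=s_{\lambda^*}=s_{\lambda^*}p_{r(\lambda)}$ when $r(\mu)=s(\lambda)$; (KP3) $s_{\lambda^*}s_\mu=\delta_{\lambda,\mu}p_{s(\lambda)}$ when $d(\lambda)=d(\mu)$; (KP4) $p_v=\sum_{\lambda\in v\Lambda^n}s_\lambda s_{\lambda^*}$ for $n\neq0$. Convention $s_v=s_{v^*}=p_v$. ${\rm KP}_R(\Lambda)$ is spanned by $\{s_\mu s_{\nu^*}: s(\mu)=s(\nu)\}$ and carries the $R$-linear involution $a\mapsto a^*$ with $(s_\alpha s_{\beta^*})^*=s_\beta s_{\alpha^*}$. $\mathcal{D}$ is the $R$-subalgebra generated by $\{s_\mu s_{\mu^*}:\mu\in\Lambda\}$. Let $\Omega_k$ be the $k$-graph with objects $\mathbb{N}^k$, morphisms $\{(p,q): p\le q\}$, $r(p,q)=p$, $s(p,q)=q$, $(p,q)(q,t)=(p,t)$, $d(p,q)=q-p$. An infinite path is a degree-preserving functor $x:\Omega_k\to\Lambda$; $\Lambda^\infty$ is the set of infinite paths, $r(x)=x(0,0)$, and $v\Lambda^\infty=\{x: r(x)=v\}$. For $\alpha\in\Lambda$ and $x\in s(\alpha)\Lambda^\infty$, $\alpha x$ is the unique infinite path with $(\alpha x)(0,n)=\alpha\,x(0,n-d(\alpha))$ for all $n\ge d(\alpha)$. *)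

theory Defs
  imports Main "HOL-Library.Function_Algebras" "HOL-Library.Countable_Set"
begin

text \<open>Elements of N^k are functions nat => nat vanishing from index k on;
  addition, subtraction, 0 and the order are pointwise.\<close>
definition Nk :: "nat \<Rightarrow> (nat \<Rightarrow> nat) set" where
  "Nk k = {n. \<forall>i\<ge>k. n i = 0}"

text \<open>A small category with vertex set, path set, range, source, identities,
  composition (comp lam mu is defined when src lam = rng mu) and degree functor.\<close>
record ('v, 'a) kgraph =
  verts :: "'v set"
  paths :: "'a set"
  rng   :: "'a \<Rightarrow> 'v"
  src   :: "'a \<Rightarrow> 'v"
  ident :: "'v \<Rightarrow> 'a"
  comp  :: "'a \<Rightarrow> 'a \<Rightarrow> 'a"
  deg   :: "'a \<Rightarrow> (nat \<Rightarrow> nat)"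

definition is_kgraph :: "nat \<Rightarrow> ('v, 'a) kgraph \<Rightarrow> bool" where
  "is_kgraph k G \<longleftrightarrow>
     countable (verts G) \<and> countable (paths G) \<and>
     (\<forall>l\<in>paths G. rng G l \<in> verts G \<and> src G l \<in> verts G \<and> deg G l \<in> Nk k) \<and>
     (\<forall>v\<in>verts G. ident G v \<in> paths G \<and> rng G (ident G v) = v \<and> src G (ident G v) = v
                    \<and> deg G (ident G v) = 0) \<and>
     (\<forall>l\<in>paths G. comp G (ident G (rng G l)) l = l \<and> comp G l (ident G (src G l)) = l) \<and>
     (\<forall>l\<in>paths G. \<forall>m\<in>paths G. src G l = rng G m \<longrightarrow>
         comp G l m \<in> paths G \<and> rng G (comp G l m) = rng G l \<and> src G (comp G l m) = src G m
         \<and> deg G (comp G l m) = deg G l + deg G m) \<and>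
     (\<forall>l\<in>paths G. \<forall>m\<in>paths G. \<forall>n\<in>paths G. src G l = rng G m \<longrightarrow> src G m = rng G n \<longrightarrow>
         comp G (comp G l m) n = comp G l (comp G m n)) \<and>
     (\<forall>l\<in>paths G. \<forall>m\<in>Nk k. \<forall>n\<in>Nk k. deg G l = m + n \<longrightarrow>
         (\<exists>!(mu, nu). mu \<in> paths G \<and> nu \<in> paths G \<and> src G mu = rng G nu \<and>
                     deg G mu = m \<and> deg G nu = n \<and> l = comp G mu nu))"

definition row_finite_no_sources :: "nat \<Rightarrow> ('v, 'a) kgraph \<Rightarrow> bool" where
  "row_finite_no_sources k G \<longleftrightarrow>
     (\<forall>v\<in>verts G. \<forall>n\<in>Nk k.
        finite {l\<in>paths G. rng G l = v \<and> deg G l = n} \<and>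
        {l\<in>paths G. rng G l = v \<and> deg G l = n} \<noteq> {})"

datatype ('v, 'a) kpgen = Pv 'v | Sg 'a | Ss 'a

text \<open>Terms of the free (non-unital, associative) R-algebra on the generators.\<close>
datatype ('g, 'r) fterm =
    TZero | TGen 'g | TAdd "('g, 'r) fterm" "('g, 'r) fterm" | TNeg "('g, 'r) fterm"
  | TMul "('g, 'r) fterm" "('g, 'r) fterm" | TSmul 'r "('g, 'r) fterm"

type_synonym ('v, 'a, 'r) kpterm = "(('v, 'a) kpgen, 'r) fterm"

text \<open>s_lambda and s_{lambda^*}, with the convention s_v = s_{v^*} = p_v for degree-0 paths
  (which are exactly the identities v).\<close>
definition sT :: "('v, 'a) kgraph \<Rightarrow> 'a \<Rightarrow> ('v, 'a, 'r) kpterm" where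
  "sT G l = (if deg G l = 0 then TGen (Pv (src G l)) else TGen (Sg l))"

definition sstT :: "('v, 'a) kgraph \<Rightarrow> 'a \<Rightarrow> ('v, 'a, 'r) kpterm" where
  "sstT G l = (if deg G l = 0 then TGen (Pv (src G l)) else TGen (Ss l))"

definition pT :: "'v \<Rightarrow> ('v, 'a, 'r) kpterm" where
  "pT v = TGen (Pv v)"

fun tsum_list :: "('g, 'r) fterm list \<Rightarrow> ('g, 'r) fterm" where
  "tsum_list [] = TZero"
| "tsum_list (t # ts) = TAdd t (tsum_list ts)"

text \<open>Equality in KP_R(Lambda): the smallest congruence on terms containing the axioms
  of an associative R-algebra and the relations (KP1)-(KP4).\<close>
inductive kp_eq :: "nat \<Rightarrow> ('v, 'a) kgraph \<Rightarrow> ('v, 'a, 'r::comm_ring_1) kpterm \<Rightarrow> ('v, 'a, 'r) kpterm \<Rightarrow> bool"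
  for k :: nat and G :: "('v, 'a) kgraph" where
  refl: "kp_eq k G a a"
| sym: "kp_eq k G a b \<Longrightarrow> kp_eq k G b a"
| trans: "kp_eq k G a b \<Longrightarrow> kp_eq k G b c \<Longrightarrow> kp_eq k G a c"
| cong_add: "kp_eq k G a a' \<Longrightarrow> kp_eq k G b b' \<Longrightarrow> kp_eq k G (TAdd a b) (TAdd a' b')"
| cong_neg: "kp_eq k G a a' \<Longrightarrow> kp_eq k G (TNeg a) (TNeg a')"
| cong_mul: "kp_eq k G a a' \<Longrightarrow> kp_eq k G b b' \<Longrightarrow> kp_eq k G (TMul a b) (TMul a' b')"
| cong_smul: "kp_eq k G a a' \<Longrightarrow> kp_eq k G (TSmul r a) (TSmul r a')"
| add_assoc: "kp_eq k G (TAdd (TAdd a b) c) (TAdd a (TAdd b c))"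
| add_comm: "kp_eq k G (TAdd a b) (TAdd b a)"
| add_zero: "kp_eq k G (TAdd a TZero) a"
| add_neg: "kp_eq k G (TAdd a (TNeg a)) TZero"
| mul_assoc: "kp_eq k G (TMul (TMul a b) c) (TMul a (TMul b c))"
| distrib_l: "kp_eq k G (TMul a (TAdd b c)) (TAdd (TMul a b) (TMul a c))"
| distrib_r: "kp_eq k G (TMul (TAdd a b) c) (TAdd (TMul a c) (TMul b c))"
| smul_add: "kp_eq k G (TSmul r (TAdd a b)) (TAdd (TSmul r a) (TSmul r b))"
| add_smul: "kp_eq k G (TSmul (r + r') a) (TAdd (TSmul r a) (TSmul r' a))"
| smul_smul: "kp_eq k G (TSmul (r * r') a) (TSmul r (TSmul r' a))"
| one_smul: "kp_eq k G (TSmul 1 a) a"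
| smul_mul_l: "kp_eq k G (TSmul r (TMul a b)) (TMul (TSmul r a) b)"
| smul_mul_r: "kp_eq k G (TSmul r (TMul a b)) (TMul a (TSmul r b))"
| KP1_idem: "v \<in> verts G \<Longrightarrow> kp_eq k G (TMul (pT v) (pT v)) (pT v)"
| KP1_orth: "v \<in> verts G \<Longrightarrow> w \<in> verts G \<Longrightarrow> v \<noteq> w \<Longrightarrow> kp_eq k G (TMul (pT v) (pT w)) TZero"
| KP2_s: "l \<in> paths G \<Longrightarrow> m \<in> paths G \<Longrightarrow> deg G l \<noteq> 0 \<Longrightarrow> deg G m \<noteq> 0 \<Longrightarrow> rng G m = src G l \<Longrightarrow>
           kp_eq k G (TMul (sT G l) (sT G m)) (sT G (comp G l m))"
| KP2_sst: "l \<in> paths G \<Longrightarrow> m \<in> paths G \<Longrightarrow> deg G l \<noteq> 0 \<Longrightarrow> deg G m \<noteq> 0 \<Longrightarrow> rng G m = src G l \<Longrightarrow>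
           kp_eq k G (TMul (sstT G m) (sstT G l)) (sstT G (comp G l m))"
| KP2_pr_s: "l \<in> paths G \<Longrightarrow> deg G l \<noteq> 0 \<Longrightarrow> kp_eq k G (TMul (pT (rng G l)) (sT G l)) (sT G l)"
| KP2_s_ps: "l \<in> paths G \<Longrightarrow> deg G l \<noteq> 0 \<Longrightarrow> kp_eq k G (TMul (sT G l) (pT (src G l))) (sT G l)"
| KP2_ps_sst: "l \<in> paths G \<Longrightarrow> deg G l \<noteq> 0 \<Longrightarrow> kp_eq k G (TMul (pT (src G l)) (sstT G l)) (sstT G l)"
| KP2_sst_pr: "l \<in> paths G \<Longrightarrow> deg G l \<noteq> 0 \<Longrightarrow> kp_eq k G (TMul (sstT G l) (pT (rng G l))) (sstT G l)"
| KP3: "l \<in> paths G \<Longrightarrow> m \<in> paths G \<Longrightarrow> deg G l \<noteq> 0 \<Longrightarrow> deg G l = deg G m \<Longrightarrow>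
           kp_eq k G (TMul (sstT G l) (sT G m)) (if l = m then pT (src G l) else TZero)"
| KP4: "v \<in> verts G \<Longrightarrow> n \<in> Nk k \<Longrightarrow> n \<noteq> 0 \<Longrightarrow> distinct xs \<Longrightarrow>
           set xs = {l\<in>paths G. rng G l = v \<and> deg G l = n} \<Longrightarrow>
           kp_eq k G (pT v) (tsum_list (map (\<lambda>l. TMul (sT G l) (sstT G l)) xs))"

fun kp_star :: "('v, 'a, 'r) kpterm \<Rightarrow> ('v, 'a, 'r) kpterm" where
  "kp_star TZero = TZero"
| "kp_star (TGen (Pv v)) = TGen (Pv v)"
| "kp_star (TGen (Sg l)) = TGen (Ss l)"
| "kp_star (TGen (Ss l)) = TGen (Sg l)"
| "kp_star (TAdd a b) = TAdd (kp_star a) (kp_star b)"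
| "kp_star (TNeg a) = TNeg (kp_star a)"
| "kp_star (TMul a b) = TMul (kp_star b) (kp_star a)"
| "kp_star (TSmul r a) = TSmul r (kp_star a)"

text \<open>Representing terms of the subalgebra D generated by the s_mu s_{mu^*}.\<close>
inductive_set kp_D :: "('v, 'a) kgraph \<Rightarrow> ('v, 'a, 'r) kpterm set" for G :: "('v, 'a) kgraph" where
  gen: "m \<in> paths G \<Longrightarrow> TMul (sT G m) (sstT G m) \<in> kp_D G"
| zero: "TZero \<in> kp_D G"
| add: "a \<in> kp_D G \<Longrightarrow> b \<in> kp_D G \<Longrightarrow> TAdd a b \<in> kp_D G"
| neg: "a \<in> kp_D G \<Longrightarrow> TNeg a \<in> kp_D G"
| mul: "a \<in> kp_D G \<Longrightarrow> b \<in> kp_D G \<Longrightarrow> TMul a b \<in> kp_D G"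
| smul: "a \<in> kp_D G \<Longrightarrow> TSmul r a \<in> kp_D G"

text \<open>A degree-preserving functor from Omega_k; only its values on morphisms (p,q), p <= q in N^k,
  are meaningful.\<close>
definition inf_path :: "nat \<Rightarrow> ('v, 'a) kgraph \<Rightarrow> ((nat \<Rightarrow> nat) \<Rightarrow> (nat \<Rightarrow> nat) \<Rightarrow> 'a) \<Rightarrow> bool" where
  "inf_path k G x \<longleftrightarrow>
     (\<forall>p\<in>Nk k. x p p \<in> ident G ` verts G) \<and>
     (\<forall>p\<in>Nk k. \<forall>q\<in>Nk k. p \<le> q \<longrightarrow> x p q \<in> paths G \<and> deg G (x p q) = q - p) \<and>
     (\<forall>p\<in>Nk k. \<forall>q\<in>Nk k. \<forall>t\<in>Nk k. p \<le> q \<longrightarrow> q \<le> t \<longrightarrow>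
         src G (x p q) = rng G (x q t) \<and> comp G (x p q) (x q t) = x p t)"

definition inf_rng :: "('v, 'a) kgraph \<Rightarrow> ((nat \<Rightarrow> nat) \<Rightarrow> (nat \<Rightarrow> nat) \<Rightarrow> 'a) \<Rightarrow> 'v" where
  "inf_rng G x = rng G (x 0 0)"

definition inf_eq :: "nat \<Rightarrow> ((nat \<Rightarrow> nat) \<Rightarrow> (nat \<Rightarrow> nat) \<Rightarrow> 'a) \<Rightarrow> ((nat \<Rightarrow> nat) \<Rightarrow> (nat \<Rightarrow> nat) \<Rightarrow> 'a) \<Rightarrow> bool" where
  "inf_eq k y z \<longleftrightarrow> (\<forall>p\<in>Nk k. \<forall>q\<in>Nk k. p \<le> q \<longrightarrow> y p q = z p q)"

text \<open>alpha x: the (unique up to inf_eq) infinite path with (alpha x)(0,n) = alpha x(0, n - d(alpha)).\<close>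
definition inf_concat :: "nat \<Rightarrow> ('v, 'a) kgraph \<Rightarrow> 'a \<Rightarrow> ((nat \<Rightarrow> nat) \<Rightarrow> (nat \<Rightarrow> nat) \<Rightarrow> 'a)
                          \<Rightarrow> ((nat \<Rightarrow> nat) \<Rightarrow> (nat \<Rightarrow> nat) \<Rightarrow> 'a)" where
  "inf_concat k G a x = (SOME y. inf_path k G y \<and>
      (\<forall>n\<in>Nk k. deg G a \<le> n \<longrightarrow> y 0 n = comp G a (x 0 (n - deg G a))))"

end

theory Submission
  imports Defs
begin

text \<open>
  On functions of infinite paths, \<open>KP\<^sub>R(\<Lambda>)\<close> acts by letting \<open>s\<^sub>\<lambda>\<close> shift the paths that start
  with \<open>\<lambda>\<close> and \<open>s\<^bsub>\<lambda>\<^sup>*\<^esub>\<close> prepend \<open>\<lambda>\<close>, so that \<open>s\<^sub>\<mu>s\<^bsub>\<mu>\<^sup>*\<^esub>\<close> multiplies by the indicator of the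
  paths starting with \<open>\<mu>\<close>. Hence (1) says that \<open>\<alpha>\<gamma>\<close> and \<open>\<beta>\<gamma>\<close> start the same infinite paths, and
  taking \<open>\<gamma> = x(0,n)\<close> for all \<open>n\<close> gives \<open>\<alpha>x = \<beta>x\<close>, which is (3).

  Conversely, (3) implies that every \<open>\<alpha>\<gamma>\<delta>\<close> with \<open>d(\<delta>) = d(\<beta>\<gamma>)\<close> equals some \<open>\<beta>\<gamma>\<delta>'\<close> with
  \<open>d(\<delta>') = d(\<alpha>\<gamma>)\<close>, and vice versa, so the (KP4)-expansions of \<open>s\<^bsub>\<alpha>\<gamma>\<^esub>s\<^bsub>(\<alpha>\<gamma>)\<^sup>*\<^esub>\<close> and
  \<open>s\<^bsub>\<beta>\<gamma>\<^esub>s\<^bsub>(\<beta>\<gamma>)\<^sup>*\<^esub>\<close> have the same terms; this is (1). Expanding \<open>a = s\<^sub>\<alpha>s\<^bsub>\<beta>\<^sup>*\<^esub>\<close> along the paths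
  of degree \<open>d(\<mu>)\<close> shows in the same way that \<open>a\<close> commutes with \<open>s\<^sub>\<mu>s\<^bsub>\<mu>\<^sup>*\<^esub>\<close>, hence with \<open>\<D>\<close>, and
  \<open>aa\<^sup>* = s\<^sub>\<alpha>s\<^bsub>\<alpha>\<^sup>*\<^esub>\<close>, \<open>a\<^sup>*a = s\<^sub>\<beta>s\<^bsub>\<beta>\<^sup>*\<^esub>\<close> are equal by (1), so (3) implies (2). Finally, under (2)
  the element \<open>a s\<^bsub>\<beta>\<gamma>\<^esub>s\<^bsub>(\<beta>\<gamma>)\<^sup>*\<^esub> a\<^sup>*\<close> equals \<open>s\<^bsub>\<alpha>\<gamma>\<^esub>s\<^bsub>(\<alpha>\<gamma>)\<^sup>*\<^esub>\<close> by the relations and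
  \<open>s\<^bsub>\<beta>\<gamma>\<^esub>s\<^bsub>(\<beta>\<gamma>)\<^sup>*\<^esub>aa\<^sup>* = s\<^bsub>\<beta>\<gamma>\<^esub>s\<^bsub>(\<beta>\<gamma>)\<^sup>*\<^esub>\<close> by commutation, which is (1).
\<close>

section \<open>Degrees\<close>

lemma Nk_zero [simp]: "0 \<in> Nk k"
  by (simp add: Nk_def)

lemma Nk_add [intro]: "a \<in> Nk k \<Longrightarrow> b \<in> Nk k \<Longrightarrow> a + b \<in> Nk k"
  by (simp add: Nk_def)

lemma Nk_diff [intro]: "a \<in> Nk k \<Longrightarrow> a - b \<in> Nk k"
  by (simp add: Nk_def)

lemma Nk_le: "b \<le> a \<Longrightarrow> a \<in> Nk k \<Longrightarrow> b \<in> Nk k"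
  unfolding Nk_def le_fun_def by (simp, metis le_zero_eq)

lemma le_add_fun1: "(p::nat \<Rightarrow> nat) \<le> p + q"
  by (simp add: le_fun_def)

lemma le_add_fun2: "(q::nat \<Rightarrow> nat) \<le> p + q"
  by (simp add: le_fun_def)

lemma add_diff_inverse_fun: "(p::nat \<Rightarrow> nat) \<le> q \<Longrightarrow> p + (q - p) = q"
  by (auto simp: le_fun_def fun_eq_iff)

lemma le_diff_fun:
  assumes "(p::nat \<Rightarrow> nat) + q \<le> d"
  shows "q \<le> d - p"
proof (rule le_funI)
  fix x have "p x + q x \<le> d x" using le_funD[OF assms] by simp
  then show "q x \<le> (d - p) x" by simp
qed

lemma diff_le_fun:
  assumes "(p::nat \<Rightarrow> nat) \<le> a + b"
  shows "p - a \<le> b"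
proof (rule le_funI)
  fix x have "p x \<le> a x + b x" using le_funD[OF assms] by simp
  then show "(p - a) x \<le> b x" by simp
qed

section \<open>Paths in a \<open>k\<close>-graph\<close>

locale k_graph =
  fixes k :: nat and G :: "('v, 'a) kgraph"
  assumes is_kgraph: "is_kgraph k G"
begin

lemma kgraph_paths: "\<forall>l\<in>paths G. rng G l \<in> verts G \<and> src G l \<in> verts G \<and> deg G l \<in> Nk k"
  using is_kgraph unfolding is_kgraph_def by (elim conjE)

lemma kgraph_ident: "\<forall>v\<in>verts G. ident G v \<in> paths G \<and> rng G (ident G v) = v \<and> src G (ident G v) = v
                    \<and> deg G (ident G v) = 0"
  using is_kgraph unfolding is_kgraph_def by (elim conjE)

lemma kgraph_comp_ident:
    "\<forall>l\<in>paths G. comp G (ident G (rng G l)) l = l \<and> comp G l (ident G (src G l)) = l"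
  using is_kgraph unfolding is_kgraph_def by (elim conjE)

lemma kgraph_comp: "\<forall>l\<in>paths G. \<forall>m\<in>paths G. src G l = rng G m \<longrightarrow>
         comp G l m \<in> paths G \<and> rng G (comp G l m) = rng G l \<and> src G (comp G l m) = src G m
         \<and> deg G (comp G l m) = deg G l + deg G m"
  using is_kgraph unfolding is_kgraph_def by (elim conjE)

lemma kgraph_assoc: "\<forall>l\<in>paths G. \<forall>m\<in>paths G. \<forall>n\<in>paths G. src G l = rng G m \<longrightarrow>
         src G m = rng G n \<longrightarrow> comp G (comp G l m) n = comp G l (comp G m n)"
  using is_kgraph unfolding is_kgraph_def by (elim conjE)

lemma kgraph_factorisation: "\<forall>l\<in>paths G. \<forall>m\<in>Nk k. \<forall>n\<in>Nk k. deg G l = m + n \<longrightarrow>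
         (\<exists>!(\<mu>, \<nu>). \<mu> \<in> paths G \<and> \<nu> \<in> paths G \<and> src G \<mu> = rng G \<nu> \<and>
                     deg G \<mu> = m \<and> deg G \<nu> = n \<and> l = comp G \<mu> \<nu>)"
  using is_kgraph unfolding is_kgraph_def by (elim conjE)

lemma rng_in_verts: "l \<in> paths G \<Longrightarrow> rng G l \<in> verts G"
  and src_in_verts: "l \<in> paths G \<Longrightarrow> src G l \<in> verts G"
  and deg_in_Nk: "l \<in> paths G \<Longrightarrow> deg G l \<in> Nk k"
  using kgraph_paths by blast+

lemma ident_in_paths: "v \<in> verts G \<Longrightarrow> ident G v \<in> paths G"
  and ident_rng [simp]: "v \<in> verts G \<Longrightarrow> rng G (ident G v) = v"
  and ident_src [simp]: "v \<in> verts G \<Longrightarrow> src G (ident G v) = v"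
  and ident_deg [simp]: "v \<in> verts G \<Longrightarrow> deg G (ident G v) = 0"
  using kgraph_ident by blast+

lemma comp_ident_left: "l \<in> paths G \<Longrightarrow> comp G (ident G (rng G l)) l = l"
  and comp_ident_right: "l \<in> paths G \<Longrightarrow> comp G l (ident G (src G l)) = l"
  using kgraph_comp_ident by blast+

context
  fixes l m :: 'a
  assumes l: "l \<in> paths G" and m: "m \<in> paths G" and lm: "src G l = rng G m"
begin

lemma comp_in_paths: "comp G l m \<in> paths G"
  and comp_rng [simp]: "rng G (comp G l m) = rng G l"
  and comp_src [simp]: "src G (comp G l m) = src G m"
  and comp_deg [simp]: "deg G (comp G l m) = deg G l + deg G m"
  using kgraph_comp l m lm by blast+

end

lemma comp_assoc:
  "\<lbrakk>l \<in> paths G; m \<in> paths G; n \<in> paths G; src G l = rng G m; src G m = rng G n\<rbrakk>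
   \<Longrightarrow> comp G (comp G l m) n = comp G l (comp G m n)"
  using kgraph_assoc by blast

lemma unique_factorisation:
  "\<lbrakk>l \<in> paths G; m \<in> Nk k; n \<in> Nk k; deg G l = m + n\<rbrakk> \<Longrightarrow>
   \<exists>!(\<mu>, \<nu>). \<mu> \<in> paths G \<and> \<nu> \<in> paths G \<and> src G \<mu> = rng G \<nu> \<and>
             deg G \<mu> = m \<and> deg G \<nu> = n \<and> l = comp G \<mu> \<nu>"
  using kgraph_factorisation by blast

abbreviation paths_from :: "'v \<Rightarrow> (nat \<Rightarrow> nat) \<Rightarrow> 'a set" where
  "paths_from v n \<equiv> {l\<in>paths G. rng G l = v \<and> deg G l = n}"

definition factorisation_at :: "'a \<Rightarrow> (nat \<Rightarrow> nat) \<Rightarrow> 'a \<times> 'a \<Rightarrow> bool" where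
  "factorisation_at l p = (\<lambda>(\<mu>, \<nu>). \<mu> \<in> paths G \<and> \<nu> \<in> paths G \<and> src G \<mu> = rng G \<nu> \<and>
                     deg G \<mu> = p \<and> deg G \<nu> = deg G l - p \<and> l = comp G \<mu> \<nu>)"

text \<open>\<open>prefix_at l p\<close> and \<open>suffix_at l p\<close> are the segments \<open>l(0,p)\<close> and \<open>l(p,d(l))\<close>.\<close>

definition prefix_at :: "'a \<Rightarrow> (nat \<Rightarrow> nat) \<Rightarrow> 'a" where
  "prefix_at l p = fst (The (factorisation_at l p))"

definition suffix_at :: "'a \<Rightarrow> (nat \<Rightarrow> nat) \<Rightarrow> 'a" where
  "suffix_at l p = snd (The (factorisation_at l p))"

lemma ex1_factorisation_at:
  assumes "l \<in> paths G" "p \<le> deg G l"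
  shows "\<exists>!x. factorisation_at l p x"
proof -
  have "deg G l \<in> Nk k" using deg_in_Nk assms(1) .
  then have "p \<in> Nk k" "deg G l - p \<in> Nk k" using Nk_le assms(2) by blast+
  moreover have "deg G l = p + (deg G l - p)" using add_diff_inverse_fun[OF assms(2)] by simp
  ultimately show ?thesis
    unfolding factorisation_at_def by (rule unique_factorisation[OF assms(1)])
qed

lemma prefix_suffix_at:
  assumes "l \<in> paths G" "p \<le> deg G l"
  shows "prefix_at l p \<in> paths G" "suffix_at l p \<in> paths G"
    "src G (prefix_at l p) = rng G (suffix_at l p)"
    "deg G (prefix_at l p) = p" "deg G (suffix_at l p) = deg G l - p"
    "comp G (prefix_at l p) (suffix_at l p) = l"
proof -
  have "factorisation_at l p (prefix_at l p, suffix_at l p)"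
    unfolding prefix_at_def suffix_at_def using theI'[OF ex1_factorisation_at[OF assms]] by simp
  then show "prefix_at l p \<in> paths G" "suffix_at l p \<in> paths G"
    "src G (prefix_at l p) = rng G (suffix_at l p)"
    "deg G (prefix_at l p) = p" "deg G (suffix_at l p) = deg G l - p"
    "comp G (prefix_at l p) (suffix_at l p) = l"
    unfolding factorisation_at_def by (simp_all only: case_prod_conv)
qed

lemma prefix_suffix_at_comp:
  assumes "\<mu> \<in> paths G" "\<nu> \<in> paths G" "src G \<mu> = rng G \<nu>"
  shows "prefix_at (comp G \<mu> \<nu>) (deg G \<mu>) = \<mu>" "suffix_at (comp G \<mu> \<nu>) (deg G \<mu>) = \<nu>"
proof -
  let ?l = "comp G \<mu> \<nu>"
  have l: "?l \<in> paths G" and d: "deg G ?l = deg G \<mu> + deg G \<nu>"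
    using assms comp_in_paths by auto
  then have le: "deg G \<mu> \<le> deg G ?l" using le_add_fun1 by simp
  have "factorisation_at ?l (deg G \<mu>) (\<mu>, \<nu>)"
    unfolding factorisation_at_def case_prod_conv d using assms by simp
  then have "The (factorisation_at ?l (deg G \<mu>)) = (\<mu>, \<nu>)"
    by (rule the1_equality[OF ex1_factorisation_at[OF l le]])
  then show "prefix_at ?l (deg G \<mu>) = \<mu>" "suffix_at ?l (deg G \<mu>) = \<nu>"
    unfolding prefix_at_def suffix_at_def by auto
qed

lemma prefix_suffix_at_eqI:
  assumes "\<mu> \<in> paths G" "\<nu> \<in> paths G" "src G \<mu> = rng G \<nu>" "l = comp G \<mu> \<nu>" "p = deg G \<mu>"
  shows "prefix_at l p = \<mu>" "suffix_at l p = \<nu>"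
  using prefix_suffix_at_comp assms by auto

lemma rng_prefix_at:
  assumes "l \<in> paths G" "p \<le> deg G l"
  shows "rng G (prefix_at l p) = rng G l"
proof -
  note f = prefix_suffix_at[OF assms]
  have "rng G (comp G (prefix_at l p) (suffix_at l p)) = rng G (prefix_at l p)"
    using f by (intro comp_rng)
  thus ?thesis using f by simp
qed

lemma src_suffix_at:
  assumes "l \<in> paths G" "p \<le> deg G l"
  shows "src G (suffix_at l p) = src G l"
proof -
  note f = prefix_suffix_at[OF assms]
  have "src G (comp G (prefix_at l p) (suffix_at l p)) = src G (suffix_at l p)"
    using f by (intro comp_src)
  thus ?thesis using f by simp
qed

lemma deg_zero_ident:
  assumes "l \<in> paths G" "deg G l = 0"
  shows "l = ident G (rng G l)"
proof -
  have v: "rng G l \<in> verts G" "src G l \<in> verts G"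
    using rng_in_verts src_in_verts assms by auto
  have "prefix_at (comp G (ident G (rng G l)) l) (deg G (ident G (rng G l))) = ident G (rng G l)"
    using prefix_suffix_at_comp[of "ident G (rng G l)" l] v ident_in_paths assms by simp
  moreover have "prefix_at (comp G l (ident G (src G l))) (deg G l) = l"
    using prefix_suffix_at_comp[of l "ident G (src G l)"] v ident_in_paths assms by simp
  ultimately show ?thesis using comp_ident_left comp_ident_right assms v by simp
qed

lemma deg_zero_src:
  assumes "l \<in> paths G" "deg G l = 0"
  shows "src G l = rng G l"
  using ident_src[OF rng_in_verts[OF assms(1)]] deg_zero_ident[OF assms] by simp

lemma deg_zero_ident_src: "l \<in> paths G \<Longrightarrow> deg G l = 0 \<Longrightarrow> l = ident G (src G l)"
  using deg_zero_ident deg_zero_src by metis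

lemma prefix_suffix_at_deg:
  assumes "l \<in> paths G"
  shows "prefix_at l (deg G l) = l" "suffix_at l (deg G l) = ident G (src G l)"
  using prefix_suffix_at_comp[of l "ident G (src G l)"] comp_ident_right ident_in_paths
    src_in_verts assms by simp_all

lemma prefix_suffix_at_zero:
  assumes "l \<in> paths G"
  shows "prefix_at l 0 = ident G (rng G l)" "suffix_at l 0 = l"
  using prefix_suffix_at_comp[of "ident G (rng G l)" l] comp_ident_left ident_in_paths
    rng_in_verts assms by simp_all

lemma prefix_at_prefix_at:
  assumes "l \<in> paths G" "p \<le> q" "q \<le> deg G l"
  shows "prefix_at (prefix_at l q) p = prefix_at l p"
proof -
  define a where "a = prefix_at (prefix_at l q) p"
  define b where "b = suffix_at (prefix_at l q) p"
  define c where "c = suffix_at l q"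
  note f1 = prefix_suffix_at[OF assms(1,3), folded c_def]
  have pq: "p \<le> deg G (prefix_at l q)" using f1 assms by simp
  note f2 = prefix_suffix_at[OF f1(1) pq, folded a_def b_def]
  have bc: "src G b = rng G c" using src_suffix_at[OF f1(1) pq] f1 unfolding b_def by simp
  have "l = comp G (comp G a b) c" using f1 f2 by simp
  also have "\<dots> = comp G a (comp G b c)" using f1 f2 bc by (intro comp_assoc) auto
  finally have eq: "l = comp G a (comp G b c)" .
  have "src G a = rng G (comp G b c)" using f1 f2 bc by simp
  then have "prefix_at l (deg G a) = a"
    using prefix_suffix_at_eqI(1)[OF f2(1) comp_in_paths[OF f2(2) f1(2) bc] _ eq HOL.refl] by blast
  then show ?thesis using f2 unfolding a_def by simp
qed

lemma prefix_at_comp_le: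
  assumes "l \<in> paths G" "m \<in> paths G" "src G l = rng G m" "p \<le> deg G l"
  shows "prefix_at (comp G l m) p = prefix_at l p"
proof -
  note f = prefix_suffix_at[OF assms(1,4)]
  have ss: "src G (suffix_at l p) = rng G m" using src_suffix_at assms by simp
  have "comp G l m = comp G (comp G (prefix_at l p) (suffix_at l p)) m" using f by simp
  also have "\<dots> = comp G (prefix_at l p) (comp G (suffix_at l p) m)"
    using f ss assms by (intro comp_assoc) auto
  finally have eq: "comp G l m = comp G (prefix_at l p) (comp G (suffix_at l p) m)" .
  have c: "comp G (suffix_at l p) m \<in> paths G" using comp_in_paths f ss assms by simp
  have s: "src G (prefix_at l p) = rng G (comp G (suffix_at l p) m)" using f ss assms by simp
  show ?thesis using prefix_suffix_at_eqI(1)[OF f(1) c s eq] f by simp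
qed

lemma prefix_suffix_at_comp_ge:
  assumes "l \<in> paths G" "m \<in> paths G" "src G l = rng G m" "deg G l \<le> p" "p \<le> deg G l + deg G m"
  shows "prefix_at (comp G l m) p = comp G l (prefix_at m (p - deg G l))"
    and "suffix_at (comp G l m) p = suffix_at m (p - deg G l)"
proof -
  define a where "a = prefix_at m (p - deg G l)"
  define b where "b = suffix_at m (p - deg G l)"
  have le: "p - deg G l \<le> deg G m" using diff_le_fun[OF assms(5)] .
  note f = prefix_suffix_at[OF assms(2) le, folded a_def b_def]
  have pr: "rng G a = src G l" using rng_prefix_at[OF assms(2) le] assms unfolding a_def by simp
  have "comp G l m = comp G l (comp G a b)" using f by simp
  also have "\<dots> = comp G (comp G l a) b" using f pr assms by (intro comp_assoc[symmetric]) auto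
  finally have eq: "comp G l m = comp G (comp G l a) b" .
  have d: "p = deg G (comp G l a)" using f assms pr add_diff_inverse_fun[OF assms(4)] by simp
  have c: "comp G l a \<in> paths G" using f assms pr comp_in_paths by auto
  have s: "src G (comp G l a) = rng G b" using f assms pr by simp
  show "prefix_at (comp G l m) p = comp G l a" "suffix_at (comp G l m) p = b"
    using prefix_suffix_at_eqI[OF c f(2) s eq d] by auto
qed

lemma suffix_at_suffix_at:
  assumes "l \<in> paths G" "p + q \<le> deg G l"
  shows "suffix_at (suffix_at l p) q = suffix_at l (p + q)"
    and "prefix_at (suffix_at l p) q = suffix_at (prefix_at l (p + q)) p"
proof -
  define a where "a = prefix_at l p"
  define b where "b = prefix_at (suffix_at l p) q"
  define c where "c = suffix_at (suffix_at l p) q"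
  have p: "p \<le> deg G l" using order_trans[OF le_add_fun1 assms(2)] .
  note f1 = prefix_suffix_at[OF assms(1) p, folded a_def]
  have q: "q \<le> deg G (suffix_at l p)" using f1 le_diff_fun[OF assms(2)] by simp
  note f2 = prefix_suffix_at[OF f1(2) q, folded b_def c_def]
  have r: "rng G b = src G a" using rng_prefix_at f1 f2 q unfolding b_def by simp
  have "l = comp G a (comp G b c)" using f1 f2 by simp
  also have "\<dots> = comp G (comp G a b) c" using comp_assoc f1 f2 r by simp
  finally have eq: "l = comp G (comp G a b) c" .
  have c: "comp G a b \<in> paths G" using comp_in_paths f1 f2 r by simp
  have dc: "deg G (comp G a b) = p + q" using f1 f2 r by simp
  have s: "src G (comp G a b) = rng G c" using f1 f2 r by simp
  have "suffix_at l (p + q) = c" "prefix_at l (p + q) = comp G a b"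
    using prefix_suffix_at_eqI[OF c f2(2) s eq] dc by auto
  then show "suffix_at (suffix_at l p) q = suffix_at l (p + q)"
    "prefix_at (suffix_at l p) q = suffix_at (prefix_at l (p + q)) p"
    using prefix_suffix_at_comp(2)[of a b] f1 f2 r unfolding b_def c_def by simp_all
qed

lemma inj_on_comp_paths_from:
  assumes "l \<in> paths G"
  shows "inj_on (comp G l) (paths_from (src G l) n)"
proof (rule inj_onI)
  fix x y assume "x \<in> paths_from (src G l) n" "y \<in> paths_from (src G l) n" "comp G l x = comp G l y"
  then show "x = y"
    using prefix_suffix_at_comp(2)[OF assms] by (metis (mono_tags, lifting) mem_Collect_eq)
qed

end

section \<open>Infinite paths\<close>

type_synonym 'a ipath = "(nat \<Rightarrow> nat) \<Rightarrow> 'a"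

context k_graph
begin

text \<open>An infinite path \<open>x\<close> is represented by the family \<open>n \<mapsto> x(0,n)\<close> of its initial
  segments. Outside \<open>\<nat>\<^sup>k\<close> the family is \<open>undefined\<close>, so that it is determined by its
  meaningful values; \<open>ishift p\<close> is the shift map \<open>\<sigma>\<^sup>p\<close> and \<open>icat l\<close> prepends \<open>l\<close>.\<close>

definition ipaths :: "'a ipath set" where
  "ipaths = {y. (\<forall>n\<in>Nk k. y n \<in> paths G \<and> deg G (y n) = n) \<and> (\<forall>n. n \<notin> Nk k \<longrightarrow> y n = undefined)
     \<and> (\<forall>n\<in>Nk k. \<forall>m\<in>Nk k. n \<le> m \<longrightarrow> y n = prefix_at (y m) n)}"

definition irng :: "'a ipath \<Rightarrow> 'v" where
  "irng y = rng G (y 0)"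

definition ishift :: "(nat \<Rightarrow> nat) \<Rightarrow> 'a ipath \<Rightarrow> 'a ipath" where
  "ishift p y = (\<lambda>n. if n \<in> Nk k then suffix_at (y (p + n)) p else undefined)"

definition icat :: "'a \<Rightarrow> 'a ipath \<Rightarrow> 'a ipath" where
  "icat l y = (\<lambda>n. if n \<in> Nk k then prefix_at (comp G l (y n)) n else undefined)"

lemma ipathsI:
  assumes "\<And>n. n \<in> Nk k \<Longrightarrow> y n \<in> paths G" "\<And>n. n \<in> Nk k \<Longrightarrow> deg G (y n) = n"
    "\<And>n. n \<notin> Nk k \<Longrightarrow> y n = undefined"
    "\<And>n m. n \<in> Nk k \<Longrightarrow> m \<in> Nk k \<Longrightarrow> n \<le> m \<Longrightarrow> y n = prefix_at (y m) n"
  shows "y \<in> ipaths"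
  unfolding ipaths_def mem_Collect_eq using assms by (intro conjI ballI allI impI)

lemma ipaths_in_paths: "y \<in> ipaths \<Longrightarrow> n \<in> Nk k \<Longrightarrow> y n \<in> paths G"
  and ipaths_deg: "y \<in> ipaths \<Longrightarrow> n \<in> Nk k \<Longrightarrow> deg G (y n) = n"
  and ipaths_undefined: "y \<in> ipaths \<Longrightarrow> n \<notin> Nk k \<Longrightarrow> y n = undefined"
  unfolding ipaths_def mem_Collect_eq by (elim conjE; blast)+

lemma ipaths_prefix_at:
  assumes "y \<in> ipaths" "n \<le> m" "m \<in> Nk k"
  shows "y n = prefix_at (y m) n"
proof -
  have "\<forall>n\<in>Nk k. \<forall>m\<in>Nk k. n \<le> m \<longrightarrow> y n = prefix_at (y m) n"
    using assms(1) unfolding ipaths_def by blast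
  then show ?thesis using assms Nk_le[OF assms(2,3)] by blast
qed

lemma ipaths_eqI:
  assumes "y \<in> ipaths" "z \<in> ipaths" "\<And>n. n \<in> Nk k \<Longrightarrow> y n = z n"
  shows "y = z"
proof (rule ext)
  fix n show "y n = z n" by (cases "n \<in> Nk k") (simp_all add: assms ipaths_undefined)
qed

lemma irng_in_verts: "y \<in> ipaths \<Longrightarrow> irng y \<in> verts G" unfolding irng_def
  using ipaths_in_paths rng_in_verts by simp

lemma ipaths_zero:
  assumes "y \<in> ipaths"
  shows "y 0 = ident G (irng y)"
  unfolding irng_def
    using deg_zero_ident[OF ipaths_in_paths[OF assms Nk_zero] ipaths_deg[OF assms Nk_zero]] .

lemma rng_ipaths:
  assumes "y \<in> ipaths" "n \<in> Nk k"
  shows "rng G (y n) = irng y"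
proof -
  have "y 0 = prefix_at (y n) 0" by (rule ipaths_prefix_at[OF assms(1) zero_le assms(2)])
  also have "\<dots> = ident G (rng G (y n))" by
    (rule prefix_suffix_at_zero(1)[OF ipaths_in_paths[OF assms]])
  finally have "y 0 = ident G (rng G (y n))" .
  hence "rng G (y 0) = rng G (y n)"
    using ident_rng[OF rng_in_verts[OF ipaths_in_paths[OF assms]]] by simp
  thus ?thesis unfolding irng_def by simp
qed

lemma ipaths_zero_iff:
  assumes "y \<in> ipaths" "v \<in> verts G"
  shows "y 0 = ident G v \<longleftrightarrow> irng y = v"
proof
  assume "y 0 = ident G v"
  hence "ident G (irng y) = ident G v" using ipaths_zero[OF assms(1)] by simp
  hence "rng G (ident G (irng y)) = rng G (ident G v)" by simp
  thus "irng y = v" using ident_rng[OF assms(2)] ident_rng[OF irng_in_verts[OF assms(1)]] by simp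
qed (use ipaths_zero[OF assms(1)] in simp)

lemma ishift_in_ipaths:
  assumes "y \<in> ipaths" "p \<in> Nk k"
  shows "ishift p y \<in> ipaths"
proof (rule ipathsI)
  fix n assume n: "n \<in> Nk k"
  have pn: "p + n \<in> Nk k" using n assms by auto
  have l: "p \<le> deg G (y (p + n))" using ipaths_deg[OF assms(1) pn] le_add_fun1 by simp
  show "ishift p y n \<in> paths G" "deg G (ishift p y n) = n"
    unfolding ishift_def
      using n prefix_suffix_at[OF ipaths_in_paths[OF assms(1) pn] l] ipaths_deg[OF assms(1) pn]
       
        by auto
next
  fix n assume "n \<notin> Nk k" thus "ishift p y n = undefined" unfolding ishift_def by simp
next
  fix n m assume n: "n \<in> Nk k" and m: "m \<in> Nk k" and nm: "n \<le> m"
  have pm: "p + m \<in> Nk k" using m assms by auto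
  have le: "p + n \<le> deg G (y (p + m))"
    using ipaths_deg[OF assms(1) pm] nm by (simp add: add_left_mono)
  have le2: "p + n \<le> p + m" using nm by (simp add: add_left_mono)
  have "ishift p y n = suffix_at (y (p + n)) p" using n unfolding ishift_def by simp
  also have "\<dots> = suffix_at (prefix_at (y (p + m)) (p + n)) p"
    using ipaths_prefix_at[OF assms(1) le2 pm] by simp
  also have "\<dots> = prefix_at (suffix_at (y (p + m)) p) n"
    using suffix_at_suffix_at(2)[OF ipaths_in_paths[OF assms(1) pm] le] by simp
  also have "\<dots> = prefix_at (ishift p y m) n" using m unfolding ishift_def by simp
  finally show "ishift p y n = prefix_at (ishift p y m) n" .
qed

lemma irng_ishift:
  assumes "y \<in> ipaths" "p \<in> Nk k"
  shows "irng (ishift p y) = src G (y p)"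
proof -
  have "ishift p y 0 = suffix_at (y p) p" unfolding ishift_def by simp
  also have "\<dots> = ident G (src G (y p))"
    using prefix_suffix_at_deg(2)[OF ipaths_in_paths[OF assms(1,2)]] ipaths_deg[OF assms(1,2)] by
      simp
  finally show ?thesis unfolding irng_def using src_in_verts ipaths_in_paths assms by simp
qed

lemma ishift_zero:
  assumes "y \<in> ipaths"
  shows "ishift 0 y = y"
  by (rule ext)
    (simp add: ishift_def prefix_suffix_at_zero(2) ipaths_in_paths ipaths_undefined assms)

lemma ishift_ishift:
  assumes "y \<in> ipaths" "p \<in> Nk k" "q \<in> Nk k"
  shows "ishift q (ishift p y) = ishift (p + q) y"
proof (rule ext)
  fix n show "ishift q (ishift p y) n = ishift (p + q) y n"
  proof (cases "n \<in> Nk k")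
    case True
    have pqn: "p + (q + n) \<in> Nk k" using True assms by auto
    have le: "p + q \<le> deg G (y (p + (q + n)))" using ipaths_deg[OF assms(1) pqn]
      by (simp add: add.assoc[symmetric] le_add_fun1)
    have "ishift q (ishift p y) n = suffix_at (suffix_at (y (p + (q + n))) p) q"
      using True assms unfolding ishift_def by auto
    also have "\<dots> = suffix_at (y (p + (q + n))) (p + q)"
      using suffix_at_suffix_at(1)[OF ipaths_in_paths[OF assms(1) pqn] le] .
    finally show ?thesis using True unfolding ishift_def by (simp add: add.assoc)
  qed (simp add: ishift_def)
qed

lemma icat_in_ipaths:
  assumes "l \<in> paths G" "y \<in> ipaths" "irng y = src G l"
  shows "icat l y \<in> ipaths"
proof (rule ipathsI)
  fix n assume n: "n \<in> Nk k"
  have c: "comp G l (y n) \<in> paths G" "deg G (comp G l (y n)) = deg G l + n"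
    using comp_in_paths ipaths_in_paths ipaths_deg rng_ipaths assms n by auto
  have le: "n \<le> deg G (comp G l (y n))" using c le_add_fun2 by simp
  show "icat l y n \<in> paths G" "deg G (icat l y n) = n" unfolding icat_def
    using n prefix_suffix_at[OF c(1) le] by auto
next
  fix n assume "n \<notin> Nk k" thus "icat l y n = undefined" unfolding icat_def by simp
next
  fix n m assume n: "n \<in> Nk k" and m: "m \<in> Nk k" and nm: "n \<le> m"
  have ym: "y m \<in> paths G" "src G l = rng G (y m)" "deg G (y m) = m"
    using ipaths_in_paths rng_ipaths ipaths_deg assms m by auto
  have c: "comp G l (y m) \<in> paths G" "deg G (comp G l (y m)) = deg G l + m"
    using comp_in_paths ym assms by auto
  have le1: "deg G l \<le> deg G l + n" by (rule le_add_fun1)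
  have le2: "deg G l + n \<le> deg G l + deg G (y m)" using ym nm by (simp add: add_left_mono)
  have "icat l y n = prefix_at (comp G l (prefix_at (y m) n)) n" unfolding icat_def
    using n ipaths_prefix_at[OF assms(2) nm m] by simp
  also have "comp G l (prefix_at (y m) n) = prefix_at (comp G l (y m)) (deg G l + n)"
    using prefix_suffix_at_comp_ge(1)[OF assms(1) ym(1,2) le1 le2] by simp
  also have "prefix_at (prefix_at (comp G l (y m)) (deg G l + n)) n = prefix_at (comp G l (y m)) n"
    using prefix_at_prefix_at[OF c(1) le_add_fun2] le2 ym c by simp
  also have "\<dots> = prefix_at (prefix_at (comp G l (y m)) m) n"
    using prefix_at_prefix_at[OF c(1) nm] c le_add_fun2 by simp
  finally show "icat l y n = prefix_at (icat l y m) n" unfolding icat_def using m by simp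
qed

lemma icat_le:
  assumes "l \<in> paths G" "y \<in> ipaths" "irng y = src G l" "p \<le> deg G l"
  shows "icat l y p = prefix_at l p"
proof -
  have p: "p \<in> Nk k" using Nk_le assms deg_in_Nk by blast
  show ?thesis unfolding icat_def
    using p prefix_at_comp_le[OF assms(1) ipaths_in_paths[OF assms(2) p] _ assms(4)]
      rng_ipaths[OF assms(2) p] assms(3) by simp
qed

lemma icat_deg:
  assumes "l \<in> paths G" "y \<in> ipaths" "irng y = src G l"
  shows "icat l y (deg G l) = l"
  using icat_le[OF assms order_refl] prefix_suffix_at_deg(1) assms by simp

lemma irng_icat:
  assumes "l \<in> paths G" "y \<in> ipaths" "irng y = src G l"
  shows "irng (icat l y) = rng G l"
  unfolding irng_def
    using icat_le[OF assms, of 0] prefix_suffix_at_zero(1) assms rng_in_verts by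
      (simp add: le_fun_def)

lemma icat_deg_add:
  assumes "l \<in> paths G" "y \<in> ipaths" "irng y = src G l" "n \<in> Nk k"
  shows "icat l y (deg G l + n) = comp G l (y n)"
proof -
  have dn: "deg G l + n \<in> Nk k" using deg_in_Nk assms by auto
  have Y: "y (deg G l + n) \<in> paths G" "src G l = rng G (y (deg G l + n))"
    "deg G (y (deg G l + n)) = deg G l + n"
    using ipaths_in_paths rng_ipaths ipaths_deg assms dn by auto
  have "icat l y (deg G l + n) = prefix_at (comp G l (y (deg G l + n))) (deg G l + n)" unfolding
    icat_def
    using dn by simp
  also have "\<dots> = comp G l (prefix_at (y (deg G l + n)) n)"
    using prefix_suffix_at_comp_ge(1)[OF assms(1) Y(1,2) le_add_fun1] Y(3)
      add_left_mono[OF le_add_fun2]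
    by simp
  also have "prefix_at (y (deg G l + n)) n = y n"
    using ipaths_prefix_at[OF assms(2) le_add_fun2 dn] by simp
  finally show ?thesis .
qed

lemma ishift_icat:
  assumes "l \<in> paths G" "y \<in> ipaths" "irng y = src G l"
  shows "ishift (deg G l) (icat l y) = y"
proof (rule ext)
  fix n show "ishift (deg G l) (icat l y) n = y n"
  proof (cases "n \<in> Nk k")
    case True
    have "ishift (deg G l) (icat l y) n = suffix_at (comp G l (y n)) (deg G l)"
      unfolding ishift_def using True icat_deg_add assms by simp
    also have "\<dots> = y n"
      using prefix_suffix_at_comp(2) assms ipaths_in_paths rng_ipaths True by simp
    finally show ?thesis .
  qed (simp add: ishift_def ipaths_undefined assms)
qed

lemma icat_ishift:
  assumes "l \<in> paths G" "y \<in> ipaths" "y (deg G l) = l"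
  shows "icat l (ishift (deg G l) y) = y"
proof (rule ext)
  fix n show "icat l (ishift (deg G l) y) n = y n"
  proof (cases "n \<in> Nk k")
    case True
    have dn: "deg G l + n \<in> Nk k" using deg_in_Nk assms True by auto
    have Y: "y (deg G l + n) \<in> paths G" "deg G (y (deg G l + n)) = deg G l + n"
      using ipaths_in_paths ipaths_deg assms dn by auto
    have le: "deg G l \<le> deg G (y (deg G l + n))" using Y le_add_fun1 by simp
    have head_eq: "prefix_at (y (deg G l + n)) (deg G l) = l"
      using ipaths_prefix_at[OF assms(2) le_add_fun1 dn] assms by simp
    have "comp G l (suffix_at (y (deg G l + n)) (deg G l)) = y (deg G l + n)"
      using prefix_suffix_at(6)[OF Y(1) le] head_eq by simp
    hence "icat l (ishift (deg G l) y) n = prefix_at (y (deg G l + n)) n" unfolding icat_def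
      ishift_def
      using True by simp
    also have "\<dots> = y n" using ipaths_prefix_at[OF assms(2) le_add_fun2 dn] by simp
    finally show ?thesis .
  qed (simp add: icat_def ipaths_undefined assms)
qed

lemma icat_icat:
  assumes "l \<in> paths G" "m \<in> paths G" "src G l = rng G m" "y \<in> ipaths" "irng y = src G m"
  shows "icat l (icat m y) = icat (comp G l m) y"
proof (rule ext)
  fix n show "icat l (icat m y) n = icat (comp G l m) y n"
  proof (cases "n \<in> Nk k")
    case True
    have Y: "y n \<in> paths G" "src G m = rng G (y n)" "deg G (y n) = n"
      using ipaths_in_paths rng_ipaths ipaths_deg assms True by auto
    have c: "comp G m (y n) \<in> paths G" "src G l = rng G (comp G m (y n))"
      "deg G (comp G m (y n)) = deg G m + n"
      using comp_in_paths Y assms by auto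
    have cc: "comp G l (comp G m (y n)) \<in> paths G" using comp_in_paths c assms by simp
    have le2: "deg G l + n \<le> deg G l + deg G (comp G m (y n))"
      using c by (simp add: add_left_mono le_add_fun2)
    have "comp G l (prefix_at (comp G m (y n)) n) =
        prefix_at (comp G l (comp G m (y n))) (deg G l + n)"
      using prefix_suffix_at_comp_ge(1)[OF assms(1) c(1,2) le_add_fun1 le2]
      by simp
    hence "icat l (icat m y) n = prefix_at (prefix_at (comp G l (comp G m (y n))) (deg G l + n)) n"
      unfolding icat_def using True by simp
    also have "\<dots> = prefix_at (comp G l (comp G m (y n))) n"
      using prefix_at_prefix_at[OF cc le_add_fun2] le2 c assms by simp
    also have "comp G l (comp G m (y n)) = comp G (comp G l m) (y n)"
      using comp_assoc assms Y by simp
    finally show ?thesis unfolding icat_def using True by simp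
  qed (simp add: icat_def)
qed

lemma icat_ident:
  assumes "y \<in> ipaths"
  shows "icat (ident G (irng y)) y = y"
proof (rule ext)
  fix n show "icat (ident G (irng y)) y n = y n"
  proof (cases "n \<in> Nk k")
    case True
    have "comp G (ident G (irng y)) (y n) = y n"
      using comp_ident_left[OF ipaths_in_paths[OF assms True]] rng_ipaths[OF assms True] by simp
    thus ?thesis unfolding icat_def
      using True prefix_suffix_at_deg(1)[OF ipaths_in_paths[OF assms True]]
        ipaths_deg[OF assms True] by simp
  qed (simp add: icat_def ipaths_undefined assms)
qed

lemma ishift_deg_iff:
  assumes "y \<in> ipaths" "l \<in> paths G" "y (deg G l) = l" "m \<in> paths G" "src G l = rng G m"
  shows "ishift (deg G l) y (deg G m) = m \<longleftrightarrow> y (deg G l + deg G m) = comp G l m"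
proof -
  have dn: "deg G l + deg G m \<in> Nk k" using deg_in_Nk assms by auto
  have Y: "y (deg G l + deg G m) \<in> paths G" "deg G (y (deg G l + deg G m)) = deg G l + deg G m"
    using ipaths_in_paths ipaths_deg assms dn by auto
  have le: "deg G l \<le> deg G (y (deg G l + deg G m))" using Y le_add_fun1 by simp
  have head_eq: "prefix_at (y (deg G l + deg G m)) (deg G l) = l"
    using ipaths_prefix_at[OF assms(1) le_add_fun1 dn] assms by simp
  have sh: "ishift (deg G l) y (deg G m) = suffix_at (y (deg G l + deg G m)) (deg G l)"
    unfolding ishift_def using deg_in_Nk assms by simp
  show ?thesis
  proof
    assume "ishift (deg G l) y (deg G m) = m"
    thus "y (deg G l + deg G m) = comp G l m"
      using sh prefix_suffix_at(6)[OF Y(1) le] head_eq by simp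
  next
    assume "y (deg G l + deg G m) = comp G l m"
    thus "ishift (deg G l) y (deg G m) = m" using sh prefix_suffix_at_comp(2) assms by simp
  qed
qed

definition ipath_of :: "((nat \<Rightarrow> nat) \<Rightarrow> (nat \<Rightarrow> nat) \<Rightarrow> 'a) \<Rightarrow> 'a ipath" where
  "ipath_of x = (\<lambda>n. if n \<in> Nk k then x 0 n else undefined)"

definition functor_of :: "'a ipath \<Rightarrow> (nat \<Rightarrow> nat) \<Rightarrow> (nat \<Rightarrow> nat) \<Rightarrow> 'a" where
  "functor_of y = (\<lambda>p q. suffix_at (y q) p)"

lemma inf_pathD:
  assumes "inf_path k G x"
  shows "\<And>p. p \<in> Nk k \<Longrightarrow> x p p \<in> ident G ` verts G"
    "\<And>p q. p \<in> Nk k \<Longrightarrow> q \<in> Nk k \<Longrightarrow> p \<le> q \<Longrightarrow> x p q \<in> paths G \<and> deg G (x p q) = q - p"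
    "\<And>p q t. p \<in> Nk k \<Longrightarrow> q \<in> Nk k \<Longrightarrow> t \<in> Nk k \<Longrightarrow> p \<le> q \<Longrightarrow> q \<le> t \<Longrightarrow>
         src G (x p q) = rng G (x q t) \<and> comp G (x p q) (x q t) = x p t"
proof -
  note d = assms[unfolded inf_path_def]
  show "\<And>p. p \<in> Nk k \<Longrightarrow> x p p \<in> ident G ` verts G"
    using d[THEN conjunct1] by blast
  show "\<And>p q. p \<in> Nk k \<Longrightarrow> q \<in> Nk k \<Longrightarrow> p \<le> q \<Longrightarrow> x p q \<in> paths G \<and> deg G (x p q) = q - p"
    using d[THEN conjunct2, THEN conjunct1] by blast
  show "\<And>p q t. p \<in> Nk k \<Longrightarrow> q \<in> Nk k \<Longrightarrow> t \<in> Nk k \<Longrightarrow> p \<le> q \<Longrightarrow> q \<le> t \<Longrightarrow>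
         src G (x p q) = rng G (x q t) \<and> comp G (x p q) (x q t) = x p t"
    using d[THEN conjunct2, THEN conjunct2] by blast
qed

lemma inf_path_suffix_at:
  assumes "inf_path k G x" "p \<in> Nk k" "q \<in> Nk k" "p \<le> q"
  shows "x p q = suffix_at (x 0 q) p"
proof -
  have a: "x 0 p \<in> paths G" "deg G (x 0 p) = p"
    using inf_pathD(2)[OF assms(1) Nk_zero assms(2) zero_le] by auto
  have b: "x p q \<in> paths G" using inf_pathD(2)[OF assms(1) assms(2,3,4)] by auto
  have c: "src G (x 0 p) = rng G (x p q)" "comp G (x 0 p) (x p q) = x 0 q"
    using inf_pathD(3)[OF assms(1) Nk_zero assms(2,3) zero_le assms(4)] by auto
  show ?thesis using prefix_suffix_at_comp(2)[OF a(1) b c(1)] c(2) a(2) by simp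
qed

lemma ipath_of_in_ipaths:
  assumes "inf_path k G x"
  shows "ipath_of x \<in> ipaths" "irng (ipath_of x) = inf_rng G x"
proof -
  show "ipath_of x \<in> ipaths"
  proof (rule ipathsI)
    fix n assume n: "n \<in> Nk k"
    show "ipath_of x n \<in> paths G" "deg G (ipath_of x n) = n" unfolding ipath_of_def
      using n inf_pathD(2)[OF assms Nk_zero n zero_le] by auto
  next
    fix n assume "n \<notin> Nk k" thus "ipath_of x n = undefined" unfolding ipath_of_def by simp
  next
    fix n m assume n: "n \<in> Nk k" and m: "m \<in> Nk k" and nm: "n \<le> m"
    have a: "x 0 n \<in> paths G" "deg G (x 0 n) = n"
      using inf_pathD(2)[OF assms Nk_zero n zero_le] by auto
    have b: "x n m \<in> paths G" using inf_pathD(2)[OF assms n m nm] by auto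
    have c: "src G (x 0 n) = rng G (x n m)" "comp G (x 0 n) (x n m) = x 0 m"
      using inf_pathD(3)[OF assms Nk_zero n m zero_le nm] by auto
    show "ipath_of x n = prefix_at (ipath_of x m) n" unfolding ipath_of_def
      using n m prefix_suffix_at_comp(1)[OF a(1) b c(1)] c(2) a(2) by simp
  qed
  show "irng (ipath_of x) = inf_rng G x" unfolding irng_def ipath_of_def inf_rng_def by simp
qed

lemma functor_of_comp:
  assumes "y \<in> ipaths" "p \<in> Nk k" "q \<in> Nk k" "t \<in> Nk k" "p \<le> q" "q \<le> t"
  shows "src G (functor_of y p q) = rng G (functor_of y q t)"
    and "comp G (functor_of y p q) (functor_of y q t) = functor_of y p t"
proof -
  have L: "y t \<in> paths G" "deg G (y t) = t" using ipaths_in_paths ipaths_deg assms by auto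
  have yq: "y q = prefix_at (y t) q" using ipaths_prefix_at[OF assms(1,6,4)] .
  have pqe: "p + (q - p) = q" using add_diff_inverse_fun[OF assms(5)] .
  have le: "p + (q - p) \<le> deg G (y t)" using pqe assms(6) L by simp
  have s1: "suffix_at (y q) p = prefix_at (suffix_at (y t) p) (q - p)"
    using suffix_at_suffix_at(2)[OF L(1) le] pqe yq by simp
  have s2: "suffix_at (y t) q = suffix_at (suffix_at (y t) p) (q - p)"
    using suffix_at_suffix_at(1)[OF L(1) le] pqe by simp
  have pt: "p \<le> deg G (y t)" using assms(5,6) L by simp
  note f1 = prefix_suffix_at[OF L(1) pt]
  have "q - p \<le> deg G (suffix_at (y t) p)" using f1 le le_diff_fun by simp
  note f2 = prefix_suffix_at[OF f1(2) this]
  have "src G (functor_of y p q) = src G (y q)"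
    unfolding functor_of_def
    using src_suffix_at[OF ipaths_in_paths[OF assms(1,3)]] ipaths_deg[OF assms(1,3)] assms(5) by
      simp
  moreover have "rng G (functor_of y q t) = src G (y q)"
    unfolding functor_of_def using prefix_suffix_at(3)[OF L(1)] assms(6) L yq by simp
  ultimately show "src G (functor_of y p q) = rng G (functor_of y q t)" by simp
  show "comp G (functor_of y p q) (functor_of y q t) = functor_of y p t"
    unfolding functor_of_def using s1 s2 f2(6) by simp
qed

lemma functor_of_ipath:
  assumes "y \<in> ipaths"
  shows "inf_path k G (functor_of y)" "ipath_of (functor_of y) = y"
    "inf_rng G (functor_of y) = irng y"
proof -
  show "inf_path k G (functor_of y)"
    unfolding inf_path_def
  proof (intro conjI ballI impI)
    fix p assume p: "p \<in> Nk k"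
    have "functor_of y p p = ident G (src G (y p))"
      unfolding functor_of_def
      using prefix_suffix_at_deg(2)[OF ipaths_in_paths[OF assms p]] ipaths_deg[OF assms p] by simp
    then show "functor_of y p p \<in> ident G ` verts G" using src_in_verts ipaths_in_paths assms p by
      blast
  next
    fix p q assume "p \<in> Nk k" "q \<in> Nk k" "p \<le> q"
    then have "p \<le> deg G (y q)" using ipaths_deg[OF assms] by simp
    from prefix_suffix_at(2,5)[OF ipaths_in_paths[OF assms \<open>q \<in> Nk k\<close>] this]
    show "functor_of y p q \<in> paths G" "deg G (functor_of y p q) = q - p"
      unfolding functor_of_def using ipaths_deg[OF assms] \<open>q \<in> Nk k\<close> by simp_all
  next
    fix p q t assume "p \<in> Nk k" "q \<in> Nk k" "t \<in> Nk k" "p \<le> q" "q \<le> t"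
    from functor_of_comp[OF assms this]
    show "src G (functor_of y p q) = rng G (functor_of y q t)"
      "comp G (functor_of y p q) (functor_of y q t) = functor_of y p t" .
  qed
  show "ipath_of (functor_of y) = y"
  proof (rule ext)
    fix n show "ipath_of (functor_of y) n = y n"
      by (cases "n \<in> Nk k") (simp_all add: ipath_of_def functor_of_def prefix_suffix_at_zero(2)
          ipaths_in_paths ipaths_undefined assms)
  qed
  show "inf_rng G (functor_of y) = irng y"
    unfolding inf_rng_def irng_def functor_of_def
    using prefix_suffix_at_zero(2) ipaths_in_paths assms by simp
qed

lemma inf_eq_if_ipath_of_eq:
  assumes "inf_path k G x" "inf_path k G x'" "ipath_of x = ipath_of x'"
  shows "inf_eq k x x'"
  unfolding inf_eq_def
proof (intro ballI impI)
  fix p q assume p: "p \<in> Nk k" and q: "q \<in> Nk k" and pq: "p \<le> q"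
  have "x 0 q = x' 0 q" using fun_cong[OF assms(3), of q] q by (simp add: ipath_of_def)
  thus "x p q = x' p q"
    using inf_path_suffix_at[OF assms(1) p q pq] inf_path_suffix_at[OF assms(2) p q pq] by simp
qed

lemma ipath_of_eq_if_inf_eq:
  assumes "inf_eq k x x'"
  shows "ipath_of x = ipath_of x'"
  using assms unfolding inf_eq_def ipath_of_def by (auto simp: fun_eq_iff zero_le)

text \<open>\<open>inf_concat\<close> is defined by a choice; \<open>icat\<close> provides a witness, and any choice has the
  same initial segments.\<close>

lemma ipath_of_inf_concat:
  assumes "inf_path k G x" "a \<in> paths G" "inf_rng G x = src G a"
  shows "inf_path k G (inf_concat k G a x)" "ipath_of (inf_concat k G a x) = icat a (ipath_of x)"
proof -
  let ?z = "ipath_of x"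
  have z: "?z \<in> ipaths" "irng ?z = src G a" using ipath_of_in_ipaths assms by auto
  let ?w = "icat a ?z"
  have w: "?w \<in> ipaths" using icat_in_ipaths assms z by simp
  have da: "deg G a \<in> Nk k" using deg_in_Nk assms by simp
  have ex: "\<exists>y. inf_path k G y \<and> (\<forall>n\<in>Nk k. deg G a \<le> n \<longrightarrow> y 0 n = comp G a (x 0 (n - deg G a)))"
  proof (intro exI conjI)
    show "inf_path k G (functor_of ?w)" using functor_of_ipath w by simp
    show "\<forall>n\<in>Nk k. deg G a \<le> n \<longrightarrow> functor_of ?w 0 n = comp G a (x 0 (n - deg G a))"
    proof (intro ballI impI)
      fix n assume n: "n \<in> Nk k" and le: "deg G a \<le> n"
      have nd: "n - deg G a \<in> Nk k" using n by auto
      have "functor_of ?w 0 n = ?w n" unfolding functor_of_def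
        using prefix_suffix_at_zero(2) ipaths_in_paths w n by simp
      also have "\<dots> = ?w (deg G a + (n - deg G a))" using add_diff_inverse_fun[OF le] by simp
      also have "\<dots> = comp G a (?z (n - deg G a))" using icat_deg_add assms z nd by simp
      finally show "functor_of ?w 0 n = comp G a (x 0 (n - deg G a))"
        using nd by (simp add: ipath_of_def)
    qed
  qed
  have sp: "inf_path k G (inf_concat k G a x) \<and>
      (\<forall>n\<in>Nk k. deg G a \<le> n \<longrightarrow> inf_concat k G a x 0 n = comp G a (x 0 (n - deg G a)))"
    unfolding inf_concat_def by (rule someI_ex[OF ex])
  show "inf_path k G (inf_concat k G a x)" using sp by simp
  show "ipath_of (inf_concat k G a x) = ?w"
  proof (rule ipaths_eqI)
    show "ipath_of (inf_concat k G a x) \<in> ipaths" using ipath_of_in_ipaths sp by simp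
    show "?w \<in> ipaths" by (rule w)
    fix n assume n: "n \<in> Nk k"
    have dn: "deg G a + n \<in> Nk k" using n da by auto
    have "ipath_of (inf_concat k G a x) n =
        prefix_at (ipath_of (inf_concat k G a x) (deg G a + n)) n"
      using ipaths_prefix_at[OF ipath_of_in_ipaths(1)[of "inf_concat k G a x"] le_add_fun2 dn] sp
      by simp
    also have "ipath_of (inf_concat k G a x) (deg G a + n) = comp G a (x 0 n)"
      using sp dn le_add_fun1[of "deg G a" n] by (simp add: ipath_of_def)
    also have "comp G a (x 0 n) = ?w (deg G a + n)"
      using icat_deg_add assms z n by (simp add: ipath_of_def)
    also have "prefix_at (?w (deg G a + n)) n = ?w n"
      using ipaths_prefix_at[OF w le_add_fun2 dn] by simp
    finally show "ipath_of (inf_concat k G a x) n = ?w n" .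
  qed
qed

text \<open>Condition (3), stated for families of initial segments.\<close>

definition tails_agree :: "'a \<Rightarrow> 'a \<Rightarrow> bool" where
  "tails_agree \<alpha> \<beta> \<longleftrightarrow> (\<forall>z\<in>ipaths. irng z = src G \<alpha> \<longrightarrow> icat \<alpha> z = icat \<beta> z)"

lemma tails_agree_sym: "tails_agree \<alpha> \<beta> \<Longrightarrow> src G \<alpha> = src G \<beta> \<Longrightarrow> tails_agree \<beta> \<alpha>"
  unfolding tails_agree_def by auto

lemma tails_agree_iff:
  assumes "\<alpha> \<in> paths G" "\<beta> \<in> paths G" "src G \<alpha> = src G \<beta>"
  shows "tails_agree \<alpha> \<beta> \<longleftrightarrow> (\<forall>x. inf_path k G x \<and> inf_rng G x = src G \<alpha> \<longrightarrow>
             inf_eq k (inf_concat k G \<alpha> x) (inf_concat k G \<beta> x))"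
proof (intro iffI allI impI)
  fix x assume agree: "tails_agree \<alpha> \<beta>" and x: "inf_path k G x \<and> inf_rng G x = src G \<alpha>"
  have z: "ipath_of x \<in> ipaths" "irng (ipath_of x) = src G \<alpha>"
    using ipath_of_in_ipaths x by auto
  then have "icat \<alpha> (ipath_of x) = icat \<beta> (ipath_of x)"
    using agree unfolding tails_agree_def by blast
  moreover have "inf_rng G x = src G \<beta>" using x assms by simp
  ultimately show "inf_eq k (inf_concat k G \<alpha> x) (inf_concat k G \<beta> x)"
    using inf_eq_if_ipath_of_eq ipath_of_inf_concat assms x by metis
next
  assume eq: "\<forall>x. inf_path k G x \<and> inf_rng G x = src G \<alpha> \<longrightarrow>
    inf_eq k (inf_concat k G \<alpha> x) (inf_concat k G \<beta> x)"
  show "tails_agree \<alpha> \<beta>"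
    unfolding tails_agree_def
  proof (intro ballI impI)
    fix z assume z: "z \<in> ipaths" "irng z = src G \<alpha>"
    note X = functor_of_ipath[OF z(1)]
    have "ipath_of (inf_concat k G \<alpha> (functor_of z)) = ipath_of (inf_concat k G \<beta> (functor_of z))"
      using eq X z ipath_of_eq_if_inf_eq by simp
    moreover have "ipath_of (inf_concat k G \<alpha> (functor_of z)) = icat \<alpha> z"
      using ipath_of_inf_concat(2)[OF X(1) assms(1)] X z by simp
    moreover have "ipath_of (inf_concat k G \<beta> (functor_of z)) = icat \<beta> z"
      using ipath_of_inf_concat(2)[OF X(1) assms(2)] X z assms by simp
    ultimately show "icat \<alpha> z = icat \<beta> z" by simp
  qed
qed

end

locale row_finite_k_graph = k_graph k G for k and G :: "('v, 'a) kgraph" +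
  assumes row_finite_no_sources: "row_finite_no_sources k G"

context row_finite_k_graph
begin

lemma finite_paths_from: "v \<in> verts G \<Longrightarrow> n \<in> Nk k \<Longrightarrow> finite (paths_from v n)"
  and paths_from_nonempty: "v \<in> verts G \<Longrightarrow> n \<in> Nk k \<Longrightarrow> paths_from v n \<noteq> {}"
  using row_finite_no_sources unfolding row_finite_no_sources_def by blast+

lemma ex_distinct_list_paths_from:
  assumes "v \<in> verts G" "n \<in> Nk k"
  shows "\<exists>xs. distinct xs \<and> set xs = paths_from v n"
  using finite_distinct_list[OF finite_paths_from[OF assms]] by metis

text \<open>Since there are no sources, every vertex \<open>v\<close> receives an infinite path: extending by paths
  of degree \<open>(1,\<dots>,1)\<close> gives paths \<open>diag_path v j\<close> of degree \<open>(j,\<dots>,j)\<close>, each a prefix of the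
  next, and the segment of degree \<open>n\<close> is read off from any \<open>j \<ge> n\<^sub>1 + \<dots> + n\<^sub>k\<close>.\<close>

definition diag :: "nat \<Rightarrow> nat \<Rightarrow> nat" where
  "diag j = (\<lambda>i. if i < k then j else 0)"

lemma diag_Nk: "diag j \<in> Nk k"
  by (simp add: diag_def Nk_def)

lemma diag_Suc: "diag (Suc j) = diag j + diag 1"
  by (auto simp: diag_def fun_eq_iff)

lemma diag_mono: "j \<le> j' \<Longrightarrow> diag j \<le> diag j'"
  by (auto simp: diag_def le_fun_def)

definition diag_step :: "'a \<Rightarrow> 'a" where
  "diag_step c = (SOME e. e \<in> paths G \<and> rng G e = src G c \<and> deg G e = diag 1)"

lemma diag_step_props:
  assumes "c \<in> paths G"
  shows "diag_step c \<in> paths G \<and> rng G (diag_step c) = src G c \<and> deg G (diag_step c) = diag 1"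
proof -
  have "\<exists>e. e \<in> paths G \<and> rng G e = src G c \<and> deg G e = diag 1"
    using paths_from_nonempty[OF src_in_verts[OF assms] diag_Nk] by blast
  thus ?thesis unfolding diag_step_def by (rule someI_ex)
qed

primrec diag_path :: "'v \<Rightarrow> nat \<Rightarrow> 'a" where
  "diag_path v 0 = ident G v"
| "diag_path v (Suc j) = comp G (diag_path v j) (diag_step (diag_path v j))"

lemma diag_path_props:
  assumes "v \<in> verts G"
  shows "diag_path v j \<in> paths G \<and> rng G (diag_path v j) = v \<and> deg G (diag_path v j) = diag j"
proof (induction j)
  case 0 thus ?case using assms ident_in_paths by (simp add: diag_def fun_eq_iff)
next
  case (Suc j)
  note e = diag_step_props[of "diag_path v j"]
  show ?case using Suc e comp_in_paths diag_Suc[of j] by simp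
qed

lemma prefix_at_diag_path:
  assumes "v \<in> verts G" "j \<le> j'"
  shows "prefix_at (diag_path v j') (diag j) = diag_path v j"
  using assms(2)
proof (induction j' rule: dec_induct)
  case base thus ?case
    using prefix_suffix_at_deg(1)[of "diag_path v j"] diag_path_props[OF assms(1), of j] by simp
next
  case (step j')
  note c = diag_path_props[OF assms(1), of j']
  note e = diag_step_props[of "diag_path v j'"]
  have "prefix_at (diag_path v (Suc j')) (diag j) = prefix_at (diag_path v j') (diag j)"
    using prefix_at_comp_le[of "diag_path v j'" "diag_step (diag_path v j')" "diag j"] c e
      diag_mono[OF step(1)]
      by simp
  thus ?case using step by simp
qed

definition deg_sum :: "(nat \<Rightarrow> nat) \<Rightarrow> nat" where
  "deg_sum n = (\<Sum>i<k. n i)"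

lemma le_diag_deg_sum:
  assumes "n \<in> Nk k"
  shows "n \<le> diag (deg_sum n)"
proof (rule le_funI)
  fix i show "n i \<le> diag (deg_sum n) i"
  proof (cases "i < k")
    case True
    have "n i \<le> (\<Sum>i<k. n i)" using True by (intro member_le_sum) auto
    thus ?thesis using True by (simp add: diag_def deg_sum_def)
  next
    case False thus ?thesis using assms by (simp add: Nk_def diag_def)
  qed
qed

lemma deg_sum_mono: "n \<le> m \<Longrightarrow> deg_sum n \<le> deg_sum m"
  unfolding deg_sum_def by (intro sum_mono) (simp add: le_fun_def)

definition diag_ipath :: "'v \<Rightarrow> 'a ipath" where
  "diag_ipath v = (\<lambda>n. if n \<in> Nk k then prefix_at (diag_path v (deg_sum n)) n else undefined)"

lemma diag_ipath_in_ipaths: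
  assumes "v \<in> verts G"
  shows "diag_ipath v \<in> ipaths" "irng (diag_ipath v) = v"
proof -
  show "diag_ipath v \<in> ipaths"
  proof (rule ipathsI)
    fix n assume n: "n \<in> Nk k"
    note c = diag_path_props[OF assms, of "deg_sum n"]
    have le: "n \<le> deg G (diag_path v (deg_sum n))" using c le_diag_deg_sum n by simp
    show "diag_ipath v n \<in> paths G" "deg G (diag_ipath v n) = n" unfolding diag_ipath_def
      using n prefix_suffix_at[OF _ le] c by auto
  next
    fix n assume "n \<notin> Nk k" thus "diag_ipath v n = undefined"
      unfolding diag_ipath_def by simp
  next
    fix n m assume n: "n \<in> Nk k" and m: "m \<in> Nk k" and nm: "n \<le> m"
    note cm = diag_path_props[OF assms, of "deg_sum m"]
    have le1: "n \<le> diag (deg_sum n)" using le_diag_deg_sum n .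
    have le2: "diag (deg_sum n) \<le> deg G (diag_path v (deg_sum m))"
      using cm diag_mono deg_sum_mono nm by simp
    have le3: "m \<le> deg G (diag_path v (deg_sum m))" using cm le_diag_deg_sum m by simp
    have "diag_ipath v n = prefix_at (prefix_at (diag_path v (deg_sum m)) (diag (deg_sum n))) n"
      unfolding diag_ipath_def
      using n prefix_at_diag_path[OF assms deg_sum_mono[OF nm]] by simp
    also have "\<dots> = prefix_at (diag_path v (deg_sum m)) n"
      using prefix_at_prefix_at[OF _ le1 le2] cm by simp
    also have "\<dots> = prefix_at (prefix_at (diag_path v (deg_sum m)) m) n"
      using prefix_at_prefix_at[OF _ nm le3] cm by simp
    finally show "diag_ipath v n = prefix_at (diag_ipath v m) n" unfolding diag_ipath_def
      using m by simp
  qed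
  note c = diag_path_props[OF assms, of "deg_sum 0"]
  show "irng (diag_ipath v) = v" unfolding irng_def diag_ipath_def
    using rng_prefix_at[OF _ zero_le] c by simp
qed

lemma ex_ipath: "v \<in> verts G \<Longrightarrow> \<exists>y\<in>ipaths. irng y = v"
  using diag_ipath_in_ipaths by blast

lemma tails_agree_prefix_at:
  assumes "tails_agree \<alpha> \<beta>" "\<alpha> \<in> paths G" "\<beta> \<in> paths G" "src G \<alpha> = src G \<beta>"
  "\<gamma> \<in> paths G" "rng G \<gamma> = src G \<alpha>" "p \<le> deg G \<alpha> + deg G \<gamma>" "p \<le> deg G \<beta> + deg G \<gamma>"
  shows "prefix_at (comp G \<alpha> \<gamma>) p = prefix_at (comp G \<beta> \<gamma>) p"
proof -
  obtain z where z: "z \<in> ipaths" "irng z = src G \<gamma>"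
    using ex_ipath src_in_verts assms by blast
  have w: "icat \<gamma> z \<in> ipaths" "irng (icat \<gamma> z) = src G \<alpha>"
    using icat_in_ipaths irng_icat z assms by auto
  have "icat \<alpha> (icat \<gamma> z) = icat \<beta> (icat \<gamma> z)"
    using assms(1) w unfolding tails_agree_def by blast
  moreover have "icat \<alpha> (icat \<gamma> z) = icat (comp G \<alpha> \<gamma>) z"
    using icat_icat[OF assms(2) assms(5) _ z(1)] z assms by simp
  moreover have "icat \<beta> (icat \<gamma> z) = icat (comp G \<beta> \<gamma>) z"
    using icat_icat[OF assms(3) assms(5) _ z(1)] z assms by simp
  ultimately have e: "icat (comp G \<alpha> \<gamma>) z = icat (comp G \<beta> \<gamma>) z" by simp
  have "icat (comp G \<alpha> \<gamma>) z p = prefix_at (comp G \<alpha> \<gamma>) p"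
    using icat_le[of "comp G \<alpha> \<gamma>" z p] comp_in_paths z assms by simp
  moreover have "icat (comp G \<beta> \<gamma>) z p = prefix_at (comp G \<beta> \<gamma>) p"
    using icat_le[of "comp G \<beta> \<gamma>" z p] comp_in_paths z assms by simp
  ultimately show ?thesis using e by simp
qed

lemma tails_agree_extension:
  assumes "tails_agree \<alpha> \<beta>" "\<alpha> \<in> paths G" "\<beta> \<in> paths G" "src G \<alpha> = src G \<beta>"
  "\<gamma> \<in> paths G" "rng G \<gamma> = src G \<alpha>" "d \<in> paths G" "rng G d = src G \<gamma>" "deg G d = deg G (comp G \<beta> \<gamma>)"
  shows "\<exists>d'. d' \<in> paths G \<and> rng G d' = src G \<gamma> \<and> deg G d' = deg G (comp G \<alpha> \<gamma>) \<and>
      comp G (comp G \<alpha> \<gamma>) d = comp G (comp G \<beta> \<gamma>) d'"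
proof -
  let ?l = "comp G \<alpha> \<gamma>" and ?m = "comp G \<beta> \<gamma>"
  have lm: "?l \<in> paths G" "?m \<in> paths G" "src G ?l = src G \<gamma>" "src G ?m = src G \<gamma>"
    "deg G ?l = deg G \<alpha> + deg G \<gamma>" "deg G ?m = deg G \<beta> + deg G \<gamma>"
    using comp_in_paths assms by auto
  have gd: "comp G \<gamma> d \<in> paths G" "rng G (comp G \<gamma> d) = src G \<alpha>"
    "deg G (comp G \<gamma> d) = deg G \<gamma> + deg G d"
    using comp_in_paths assms by auto
  let ?nu = "comp G ?l d"
  have \<nu>: "?nu \<in> paths G" "deg G ?nu = deg G ?l + deg G d"
    using comp_in_paths lm assms by auto
  have e1: "?nu = comp G \<alpha> (comp G \<gamma> d)" using comp_assoc assms by simp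
  have e2: "comp G \<beta> (comp G \<gamma> d) = comp G ?m d" using comp_assoc assms by simp
  have le1: "deg G ?m \<le> deg G \<alpha> + deg G (comp G \<gamma> d)" using gd lm assms
    by (simp add: le_fun_def)
  have le2: "deg G ?m \<le> deg G \<beta> + deg G (comp G \<gamma> d)"
    using gd lm by (simp add: le_fun_def)
  have "prefix_at ?nu (deg G ?m) = prefix_at (comp G \<beta> (comp G \<gamma> d)) (deg G ?m)"
    using tails_agree_prefix_at[OF assms(1-4) gd(1) gd(2) le1 le2] e1 by simp
  also have "\<dots> = ?m" using e2 prefix_suffix_at_comp(1)[OF lm(2) assms(7)] lm assms by simp
  finally have p: "prefix_at ?nu (deg G ?m) = ?m" .
  have le: "deg G ?m \<le> deg G ?nu" using \<nu> assms lm by (simp add: le_fun_def)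
  note f = prefix_suffix_at[OF \<nu>(1) le]
  show ?thesis
  proof (intro exI conjI)
    show "suffix_at ?nu (deg G ?m) \<in> paths G" using f by simp
    show "rng G (suffix_at ?nu (deg G ?m)) = src G \<gamma>" using f p lm by simp
    show "deg G (suffix_at ?nu (deg G ?m)) = deg G ?l"
      using f \<nu> assms by simp
    show "?nu = comp G ?m (suffix_at ?nu (deg G ?m))" using f p by simp
  qed
qed

lemma comp_image_eq_if_tails_agree:
  assumes "tails_agree \<alpha> \<beta>" "\<alpha> \<in> paths G" "\<beta> \<in> paths G" "src G \<alpha> = src G \<beta>"
    "\<gamma> \<in> paths G" "rng G \<gamma> = src G \<alpha>"
  shows "comp G (comp G \<alpha> \<gamma>) ` paths_from (src G \<gamma>) (deg G (comp G \<beta> \<gamma>))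
       = comp G (comp G \<beta> \<gamma>) ` paths_from (src G \<gamma>) (deg G (comp G \<alpha> \<gamma>))"
proof
  show "comp G (comp G \<alpha> \<gamma>) ` paths_from (src G \<gamma>) (deg G (comp G \<beta> \<gamma>))
      \<subseteq> comp G (comp G \<beta> \<gamma>) ` paths_from (src G \<gamma>) (deg G (comp G \<alpha> \<gamma>))"
    using tails_agree_extension[OF assms] by fastforce
  have "tails_agree \<beta> \<alpha>" "rng G \<gamma> = src G \<beta>"
    using tails_agree_sym[OF assms(1,4)] assms(4,6) by simp_all
  then show "comp G (comp G \<beta> \<gamma>) ` paths_from (src G \<gamma>) (deg G (comp G \<alpha> \<gamma>))
      \<subseteq> comp G (comp G \<alpha> \<gamma>) ` paths_from (src G \<gamma>) (deg G (comp G \<beta> \<gamma>))"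
    using tails_agree_extension[of \<beta> \<alpha>] assms(2-5) by fastforce
qed

end

section \<open>The infinite-path representation\<close>

context k_graph
begin

fun gen_action :: "('v, 'a) kpgen \<Rightarrow> ('a ipath \<Rightarrow> 'r) \<Rightarrow> 'a ipath \<Rightarrow> 'r::comm_ring_1" where
  "gen_action (Pv v) f = (\<lambda>y. if y \<in> ipaths \<and> irng y = v then f y else 0)"
| "gen_action (Sg l) f =
    (\<lambda>y. if l \<in> paths G \<and> y \<in> ipaths \<and> y (deg G l) = l then f (ishift (deg G l) y) else 0)"
| "gen_action (Ss l) f =
    (\<lambda>y. if l \<in> paths G \<and> y \<in> ipaths \<and> irng y = src G l then f (icat l y) else 0)"

fun term_action :: "('v, 'a, 'r) kpterm \<Rightarrow> ('a ipath \<Rightarrow> 'r) \<Rightarrow> 'a ipath \<Rightarrow> 'r::comm_ring_1" where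
  "term_action TZero f = (\<lambda>y. 0)"
| "term_action (TGen g) f = gen_action g f"
| "term_action (TAdd a b) f = (\<lambda>y. term_action a f y + term_action b f y)"
| "term_action (TNeg a) f = (\<lambda>y. - term_action a f y)"
| "term_action (TMul a b) f = term_action a (term_action b f)"
| "term_action (TSmul r a) f = (\<lambda>y. r * term_action a f y)"

lemma gen_action_add: "gen_action g (\<lambda>y. f y + h y) = (\<lambda>y. gen_action g f y + gen_action g h y)"
  and gen_action_smul: "gen_action g (\<lambda>y. c * f y) = (\<lambda>y. c * gen_action g f y)"
  by (cases g; auto simp: fun_eq_iff)+

lemma term_action_add:
  "term_action a (\<lambda>y. f y + h y) = (\<lambda>y. term_action a f y + term_action a h y)"
proof (induction a arbitrary: f h)
  case (TMul a b) then show ?case by simp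
qed (auto simp: gen_action_add fun_eq_iff algebra_simps)

lemma term_action_smul: "term_action a (\<lambda>y. c * f y) = (\<lambda>y. c * term_action a f y)"
proof (induction a arbitrary: f)
  case (TMul a b) then show ?case by simp
qed (auto simp: gen_action_smul fun_eq_iff algebra_simps)

lemma term_action_sT:
  assumes "l \<in> paths G"
  shows "term_action (sT G l) f =
    (\<lambda>y. if y \<in> ipaths \<and> y (deg G l) = l then f (ishift (deg G l) y) else 0)"
proof (cases "deg G l = 0")
  case True
  have l: "l = ident G (src G l)"
    using deg_zero_ident[OF assms True] deg_zero_src[OF assms True] by simp
  have e: "\<And>y. y \<in> ipaths \<Longrightarrow> y 0 = l \<longleftrightarrow> irng y = src G l"
    using ipaths_zero_iff src_in_verts assms l by metis
  show ?thesis
  proof (rule ext)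
    fix y
    show "term_action (sT G l) f y =
      (if y \<in> ipaths \<and> y (deg G l) = l then f (ishift (deg G l) y) else 0)"
    proof (cases "y \<in> ipaths")
      case T: True
      thus ?thesis using e[OF T] ishift_zero[OF T] unfolding sT_def True by simp
    qed (simp add: sT_def True)
  qed
next
  case False show ?thesis unfolding sT_def if_not_P[OF False] using assms by (intro ext) simp
qed

lemma term_action_sstT:
  assumes "l \<in> paths G"
  shows "term_action (sstT G l) f = (\<lambda>y. if y \<in> ipaths \<and> irng y = src G l then f (icat l y) else 0)"
proof (cases "deg G l = 0")
  case True
  have l: "l = ident G (src G l)"
    using deg_zero_ident[OF assms True] deg_zero_src[OF assms True] by simp
  have e: "\<And>y. y \<in> ipaths \<Longrightarrow> irng y = src G l \<Longrightarrow> icat l y = y"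
    using icat_ident l by metis
  show ?thesis
  proof (rule ext)
    fix y
    show "term_action (sstT G l) f y = (if y \<in> ipaths \<and> irng y = src G l then f (icat l y) else 0)"
      using e[of y] unfolding sstT_def True by simp
  qed
next
  case False show ?thesis unfolding sstT_def if_not_P[OF False] using assms by (intro ext) simp
qed

lemma term_action_pT: "term_action (pT v) f = (\<lambda>y. if y \<in> ipaths \<and> irng y = v then f y else 0)"
  unfolding pT_def by simp

lemma term_action_tsum_list:
  "term_action (tsum_list ts) f y = sum_list (map (\<lambda>t. term_action t f y) ts)"
  by (induction ts) auto

lemma term_action_Proj:
  assumes "l \<in> paths G"
  shows "term_action (TMul (sT G l) (sstT G l)) f =
    (\<lambda>y. if y \<in> ipaths \<and> y (deg G l) = l then f y else 0)"
proof (rule ext)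
  fix y
  show "term_action (TMul (sT G l) (sstT G l)) f y =
    (if y \<in> ipaths \<and> y (deg G l) = l then f y else 0)"
  proof (cases "y \<in> ipaths \<and> y (deg G l) = l")
    case True
    have d: "deg G l \<in> Nk k" using deg_in_Nk assms by simp
    have "ishift (deg G l) y \<in> ipaths" "irng (ishift (deg G l) y) = src G l"
      "icat l (ishift (deg G l) y) = y"
      using ishift_in_ipaths irng_ishift icat_ishift True d assms by auto
    thus ?thesis using True by (simp add: term_action_sT term_action_sstT assms)
  qed (auto simp: term_action_sT term_action_sstT assms)
qed

lemma term_action_sT_comp:
  assumes "l \<in> paths G" "m \<in> paths G" "src G l = rng G m"
  shows "term_action (TMul (sT G l) (sT G m)) = term_action (sT G (comp G l m))"
proof (intro ext)
  fix f y
  have lm: "comp G l m \<in> paths G" using comp_in_paths assms by simp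
  show "term_action (TMul (sT G l) (sT G m)) f y = term_action (sT G (comp G l m)) f y"
  proof (cases "y \<in> ipaths \<and> y (deg G l) = l")
    case True
    have d: "deg G l \<in> Nk k" "deg G m \<in> Nk k" using deg_in_Nk assms by auto
    have "ishift (deg G l) y \<in> ipaths" using ishift_in_ipaths True d by simp
    moreover have "ishift (deg G l) y (deg G m) = m \<longleftrightarrow> y (deg G l + deg G m) = comp G l m"
      using ishift_deg_iff True assms by simp
    moreover have "ishift (deg G m) (ishift (deg G l) y) = ishift (deg G l + deg G m) y"
      using ishift_ishift True d by simp
    ultimately show ?thesis using True assms lm by (simp add: term_action_sT)
  next
    case False
    have "y \<in> ipaths \<Longrightarrow> y (deg G l + deg G m) = comp G l m \<Longrightarrow> y (deg G l) = l"
    proof -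
      assume a: "y \<in> ipaths" "y (deg G l + deg G m) = comp G l m"
      have "y (deg G l) = prefix_at (y (deg G l + deg G m)) (deg G l)"
        using ipaths_prefix_at[OF a(1) le_add_fun1] deg_in_Nk assms by auto
      thus ?thesis using a prefix_suffix_at_comp assms by simp
    qed
    thus ?thesis using False assms lm by (auto simp: term_action_sT)
  qed
qed

lemma term_action_sstT_comp:
  assumes "l \<in> paths G" "m \<in> paths G" "src G l = rng G m"
  shows "term_action (TMul (sstT G m) (sstT G l)) = term_action (sstT G (comp G l m))"
proof (intro ext)
  fix f y
  have lm: "comp G l m \<in> paths G" using comp_in_paths assms by simp
  show "term_action (TMul (sstT G m) (sstT G l)) f y = term_action (sstT G (comp G l m)) f y"
  proof (cases "y \<in> ipaths \<and> irng y = src G m")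
    case True
    have "icat m y \<in> ipaths" "irng (icat m y) = src G l" "icat l (icat m y) = icat (comp G l m) y"
      using icat_in_ipaths irng_icat icat_icat True assms by auto
    thus ?thesis using True assms lm by (simp add: term_action_sstT)
  next
    case False thus ?thesis using assms lm by (auto simp: term_action_sstT)
  qed
qed

lemma term_action_pT_sT:
  assumes "l \<in> paths G"
  shows "term_action (TMul (pT (rng G l)) (sT G l)) = term_action (sT G l)"
    and "term_action (TMul (sT G l) (pT (src G l))) = term_action (sT G l)"
    and "term_action (TMul (pT (src G l)) (sstT G l)) = term_action (sstT G l)"
    and "term_action (TMul (sstT G l) (pT (rng G l))) = term_action (sstT G l)"
proof -
  have "irng y = rng G l" if "y \<in> ipaths" "y (deg G l) = l" for y
    using rng_ipaths deg_in_Nk assms that by metis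
  then show "term_action (TMul (pT (rng G l)) (sT G l)) = term_action (sT G l)"
    using assms by (auto simp: fun_eq_iff term_action_sT term_action_pT)
  have "ishift (deg G l) y \<in> ipaths \<and> irng (ishift (deg G l) y) = src G l"
    if "y \<in> ipaths" "y (deg G l) = l" for y
    using ishift_in_ipaths irng_ishift deg_in_Nk assms that by metis
  then show "term_action (TMul (sT G l) (pT (src G l))) = term_action (sT G l)"
    using assms by (auto simp: fun_eq_iff term_action_sT term_action_pT)
  show "term_action (TMul (pT (src G l)) (sstT G l)) = term_action (sstT G l)"
    using assms by (auto simp: fun_eq_iff term_action_sstT term_action_pT)
  have "icat l y \<in> ipaths \<and> irng (icat l y) = rng G l" if "y \<in> ipaths" "irng y = src G l" for y
    using icat_in_ipaths irng_icat assms that by metis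
  then show "term_action (TMul (sstT G l) (pT (rng G l))) = term_action (sstT G l)"
    using assms by (auto simp: fun_eq_iff term_action_sstT term_action_pT)
qed

lemma term_action_sstT_sT:
  assumes "l \<in> paths G" "m \<in> paths G" "deg G l = deg G m"
  shows "term_action (TMul (sstT G l) (sT G m)) =
    term_action (if l = m then pT (src G l) else TZero)"
proof (intro ext)
  fix f y
  show "term_action (TMul (sstT G l) (sT G m)) f y =
      term_action (if l = m then pT (src G l) else TZero) f y"
  proof (cases "y \<in> ipaths \<and> irng y = src G l")
    case True
    have c1: "icat l y \<in> ipaths" using icat_in_ipaths True assms(1) by auto
    have c2: "icat l y (deg G l) = l" using icat_deg True assms(1) by auto
    have c3: "ishift (deg G l) (icat l y) = y" using ishift_icat True assms(1) by auto
    note c = c1 c2[unfolded assms(3)] c3[unfolded assms(3)]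
    show ?thesis using c True assms by (auto simp: term_action_sstT term_action_sT term_action_pT)
  next
    case False thus ?thesis
      using assms by (auto simp: term_action_sstT term_action_sT term_action_pT)
  qed
qed

lemma term_action_pT_tsum_Proj:
  assumes "n \<in> Nk k" "distinct xs" "set xs = paths_from v n"
  shows "term_action (pT v) = term_action (tsum_list (map (\<lambda>l. TMul (sT G l) (sstT G l)) xs))"
proof (intro ext)
  fix f y
  have "term_action (TMul (sT G l) (sstT G l)) f y = (if y \<in> ipaths \<and> y n = l then f y else 0)"
    if "l \<in> set xs" for l
  proof -
    have l: "l \<in> paths G" "deg G l = n" using that assms(3) by auto
    show ?thesis unfolding term_action_Proj[OF l(1)] using l(2) by simp
  qed
  then have "term_action (tsum_list (map (\<lambda>l. TMul (sT G l) (sstT G l)) xs)) f y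
      = (\<Sum>l\<in>set xs. if y \<in> ipaths \<and> y n = l then f y else 0)"
    using assms(2) by
      (simp add: term_action_tsum_list o_def sum_list_distinct_conv_sum_set cong: map_cong)
  also have "\<dots> = (if y \<in> ipaths \<and> irng y = v then f y else 0)"
  proof (cases "y \<in> ipaths")
    case True
    then have "y n \<in> set xs \<longleftrightarrow> irng y = v"
      using assms ipaths_in_paths ipaths_deg rng_ipaths by auto
    then show ?thesis using True by (simp add: sum.delta)
  qed simp
  finally show
    "term_action (pT v) f y = term_action (tsum_list (map (\<lambda>l. TMul (sT G l) (sstT G l)) xs)) f y"
    by (simp add: term_action_pT)
qed

lemma term_action_kp_eq: "kp_eq k G a b \<Longrightarrow> term_action a = term_action b"
proof (induction rule: kp_eq.induct)
  case (cong_mul a a' b b') then show ?case by simp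
next
  case (KP2_s l m) then show ?case by (simp add: term_action_sT_comp)
next
  case (KP2_sst l m) then show ?case by (simp add: term_action_sstT_comp)
next
  case (KP3 l m) then show ?case using term_action_sstT_sT by blast
next
  case (KP4 v n xs) then show ?case by (intro term_action_pT_tsum_Proj)
qed (simp_all add: fun_eq_iff algebra_simps term_action_add term_action_smul term_action_pT
    term_action_pT_sT)

lemma cylinder_eq_if_term_action_Proj_eq:
  assumes "l \<in> paths G" "m \<in> paths G" "y \<in> ipaths"
    and "term_action (TMul (sT G l) (sstT G l)) =
      (term_action (TMul (sT G m) (sstT G m)) :: _ \<Rightarrow> _ \<Rightarrow> 'r::comm_ring_1)"
  shows "y (deg G l) = l \<longleftrightarrow> y (deg G m) = m"
proof -
  let ?f = "\<lambda>z. if z = y then (1::'r) else 0"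
  have "term_action (TMul (sT G l) (sstT G l)) ?f y = term_action (TMul (sT G m) (sstT G m)) ?f y"
    using assms(4) by simp
  then show ?thesis
    unfolding term_action_Proj[OF assms(1)] term_action_Proj[OF assms(2)] using assms(3)
    by (simp split: if_splits)
qed

lemma tails_agree_if_Proj_eq:
  assumes "\<alpha> \<in> paths G" "\<beta> \<in> paths G" "src G \<alpha> = src G \<beta>"
  and proj_eq: "\<forall>\<gamma>\<in>paths G. rng G \<gamma> = src G \<alpha> \<longrightarrow>
             kp_eq k G (TMul (sT G (comp G \<alpha> \<gamma>)) (sstT G (comp G \<alpha> \<gamma>)))
                       (TMul (sT G (comp G \<beta> \<gamma>)) (sstT G (comp G \<beta> \<gamma>)) :: ('v,'a,'r::comm_ring_1) kpterm)"
  shows "tails_agree \<alpha> \<beta>"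
  unfolding tails_agree_def
proof (intro ballI impI)
  fix z assume z: "z \<in> ipaths" "irng z = src G \<alpha>"
  have ca: "icat \<alpha> z \<in> ipaths" "icat \<beta> z \<in> ipaths"
    using icat_in_ipaths z assms by auto
  show "icat \<alpha> z = icat \<beta> z"
  proof (rule ipaths_eqI[OF ca])
    fix n assume n: "n \<in> Nk k"
    have \<gamma>: "z n \<in> paths G" "rng G (z n) = src G \<alpha>" "deg G (z n) = n"
      using ipaths_in_paths rng_ipaths ipaths_deg z n by auto
    have paths: "comp G \<alpha> (z n) \<in> paths G" "comp G \<beta> (z n) \<in> paths G"
      using comp_in_paths \<gamma> assms by auto
    have "term_action (TMul (sT G (comp G \<alpha> (z n))) (sstT G (comp G \<alpha> (z n)))) =
        (term_action (TMul (sT G (comp G \<beta> (z n))) (sstT G (comp G \<beta> (z n)))) :: _ \<Rightarrow> _ \<Rightarrow> 'r)"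
      using term_action_kp_eq proj_eq \<gamma> by blast
    moreover have "icat \<alpha> z (deg G (comp G \<alpha> (z n))) = comp G \<alpha> (z n)"
      using icat_deg_add[OF assms(1) z n] \<gamma> assms(1) by simp
    ultimately have "icat \<alpha> z (deg G (comp G \<beta> (z n))) = comp G \<beta> (z n)"
      using cylinder_eq_if_term_action_Proj_eq[OF paths ca(1)] by blast
    then have "icat \<alpha> z (deg G \<beta> + n) = icat \<beta> z (deg G \<beta> + n)"
      using icat_deg_add[OF assms(2) z(1) _ n] \<gamma> z assms by simp
    moreover have "deg G \<beta> + n \<in> Nk k" using deg_in_Nk assms n by auto
    ultimately show "icat \<alpha> z n = icat \<beta> z n"
      using ipaths_prefix_at[OF ca(1) le_add_fun2] ipaths_prefix_at[OF ca(2) le_add_fun2] by metis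
  qed
qed

end

section \<open>Equational reasoning in \<open>KP\<^sub>R(\<Lambda>)\<close>\<close>

text \<open>Right-nested products, so that a factor can be rewritten inside a long product without
  reassociating by hand.\<close>

fun tprod_list :: "('g, 'r) fterm list \<Rightarrow> ('g, 'r) fterm" where
  "tprod_list [] = TZero"
| "tprod_list [a] = a"
| "tprod_list (a # b # xs) = TMul a (tprod_list (b # xs))"

context k_graph
begin

abbreviation keq :: "('v, 'a, 'r::comm_ring_1) kpterm \<Rightarrow> ('v, 'a, 'r) kpterm \<Rightarrow> bool" (infix "\<approx>" 50)
  where "a \<approx> b \<equiv> kp_eq k G a b"

lemma keq_refl[simp]: "a \<approx> a" by (rule kp_eq.refl)

lemma keq_sym: "a \<approx> b \<Longrightarrow> b \<approx> a" by (rule kp_eq.sym)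

lemma keq_trans[trans]: "a \<approx> b \<Longrightarrow> b \<approx> c \<Longrightarrow> a \<approx> c"
  by (rule kp_eq.trans)

lemma tmul_cong_left: "a \<approx> a' \<Longrightarrow> TMul a b \<approx> TMul a' b"
  by (rule kp_eq.cong_mul) auto

lemma tmul_cong_right: "b \<approx> b' \<Longrightarrow> TMul a b \<approx> TMul a b'"
  by (rule kp_eq.cong_mul) auto

lemma tadd_cong: "a \<approx> a' \<Longrightarrow> b \<approx> b' \<Longrightarrow> TAdd a b \<approx> TAdd a' b'"
  by (rule kp_eq.cong_add)

lemma tmul_assoc: "TMul (TMul a b) c \<approx> TMul a (TMul b c)" by (rule kp_eq.mul_assoc)

lemma tadd_zero_left: "TAdd TZero a \<approx> a"
proof -
  have "TAdd TZero a \<approx> TAdd a TZero" by (rule kp_eq.add_comm)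
  also have "\<dots> \<approx> a" by (rule kp_eq.add_zero)
  finally show ?thesis .
qed

lemma tneg_unique:
  assumes "TAdd x y \<approx> TZero"
  shows "x \<approx> TNeg y"
proof -
  have "x \<approx> TAdd x TZero" by (rule keq_sym, rule kp_eq.add_zero)
  also have "\<dots> \<approx> TAdd x (TAdd y (TNeg y))"
    by (rule tadd_cong, simp, rule keq_sym, rule kp_eq.add_neg)
  also have "\<dots> \<approx> TAdd (TAdd x y) (TNeg y)" by (rule keq_sym, rule kp_eq.add_assoc)
  also have "\<dots> \<approx> TAdd TZero (TNeg y)" by (rule tadd_cong[OF assms], simp)
  also have "\<dots> \<approx> TNeg y" by (rule tadd_zero_left)
  finally show ?thesis .
qed

lemma zero_if_eq_double:
  assumes "x \<approx> TAdd x x"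
  shows "x \<approx> TZero"
proof -
  have "TAdd x x \<approx> TAdd x TZero"
  proof -
    have "TAdd x TZero \<approx> x" by (rule kp_eq.add_zero)
    also have "\<dots> \<approx> TAdd x x" by (rule assms)
    finally show ?thesis by (rule keq_sym)
  qed
  have "TZero \<approx> TAdd x (TNeg x)" by (rule keq_sym, rule kp_eq.add_neg)
  also have "\<dots> \<approx> TAdd (TAdd x x) (TNeg x)" by (rule tadd_cong[OF assms], simp)
  also have "\<dots> \<approx> TAdd x (TAdd x (TNeg x))" by (rule kp_eq.add_assoc)
  also have "\<dots> \<approx> TAdd x TZero" by (rule tadd_cong, simp, rule kp_eq.add_neg)
  also have "\<dots> \<approx> x" by (rule kp_eq.add_zero)
  finally show ?thesis by (rule keq_sym)
qed

lemma tmul_zero_right: "TMul a TZero \<approx> TZero"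
proof (rule zero_if_eq_double)
  have "TMul a TZero \<approx> TMul a (TAdd TZero TZero)"
    by (rule tmul_cong_right, rule keq_sym, rule kp_eq.add_zero)
  also have "\<dots> \<approx> TAdd (TMul a TZero) (TMul a TZero)" by (rule kp_eq.distrib_l)
  finally show "TMul a TZero \<approx> TAdd (TMul a TZero) (TMul a TZero)" .
qed

lemma tmul_zero_left: "TMul TZero a \<approx> TZero"
proof (rule zero_if_eq_double)
  have "TMul TZero a \<approx> TMul (TAdd TZero TZero) a"
    by (rule tmul_cong_left, rule keq_sym, rule kp_eq.add_zero)
  also have "\<dots> \<approx> TAdd (TMul TZero a) (TMul TZero a)" by (rule kp_eq.distrib_r)
  finally show "TMul TZero a \<approx> TAdd (TMul TZero a) (TMul TZero a)" .
qed

lemma tmul_neg_right: "TMul a (TNeg t) \<approx> TNeg (TMul a t)"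
proof (rule tneg_unique)
  have "TAdd (TMul a (TNeg t)) (TMul a t) \<approx> TMul a (TAdd (TNeg t) t)"
    by (rule keq_sym, rule kp_eq.distrib_l)
  also have "\<dots> \<approx> TMul a (TAdd t (TNeg t))"
    by (rule tmul_cong_right, rule kp_eq.add_comm)
  also have "\<dots> \<approx> TMul a TZero" by (rule tmul_cong_right, rule kp_eq.add_neg)
  also have "\<dots> \<approx> TZero" by (rule tmul_zero_right)
  finally show "TAdd (TMul a (TNeg t)) (TMul a t) \<approx> TZero" .
qed

lemma tmul_neg_left: "TMul (TNeg t) a \<approx> TNeg (TMul t a)"
proof (rule tneg_unique)
  have "TAdd (TMul (TNeg t) a) (TMul t a) \<approx> TMul (TAdd (TNeg t) t) a"
    by (rule keq_sym, rule kp_eq.distrib_r)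
  also have "\<dots> \<approx> TMul (TAdd t (TNeg t)) a"
    by (rule tmul_cong_left, rule kp_eq.add_comm)
  also have "\<dots> \<approx> TMul TZero a" by (rule tmul_cong_left, rule kp_eq.add_neg)
  also have "\<dots> \<approx> TZero" by (rule tmul_zero_left)
  finally show "TAdd (TMul (TNeg t) a) (TMul t a) \<approx> TZero" .
qed

lemma tmul_tsum_list: "TMul a (tsum_list ts) \<approx> tsum_list (map (TMul a) ts)"
proof (induction ts)
  case Nil show ?case by (simp add: tmul_zero_right)
next
  case (Cons t ts)
  have "TMul a (tsum_list (t # ts)) \<approx> TAdd (TMul a t) (TMul a (tsum_list ts))"
    by (simp add: kp_eq.distrib_l)
  also have "\<dots> \<approx> TAdd (TMul a t) (tsum_list (map (TMul a) ts))"
    by (rule tadd_cong, simp, rule Cons)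
  finally show ?case by simp
qed

lemma tsum_list_tmul: "TMul (tsum_list ts) b \<approx> tsum_list (map (\<lambda>t. TMul t b) ts)"
proof (induction ts)
  case Nil show ?case by (simp add: tmul_zero_left)
next
  case (Cons t ts)
  have "TMul (tsum_list (t # ts)) b \<approx> TAdd (TMul t b) (TMul (tsum_list ts) b)"
    by (simp add: kp_eq.distrib_r)
  also have "\<dots> \<approx> TAdd (TMul t b) (tsum_list (map (\<lambda>t. TMul t b) ts))"
    by (rule tadd_cong, simp, rule Cons)
  finally show ?case by simp
qed

lemma tsum_list_cong:
  "(\<And>x. x \<in> set xs \<Longrightarrow> f x \<approx> g x) \<Longrightarrow> tsum_list (map f xs) \<approx> tsum_list (map g xs)"
proof (induction xs)
  case Nil show ?case by simp
next
  case (Cons x xs)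
  have "f x \<approx> g x" using Cons.prems by simp
  moreover have "tsum_list (map f xs) \<approx> tsum_list (map g xs)" using Cons by simp
  ultimately show ?case using tadd_cong by simp
qed

lemma tsum_list_move: "tsum_list (us @ t # vs) \<approx> TAdd t (tsum_list (us @ vs))"
proof (induction us)
  case Nil show ?case by simp
next
  case (Cons u us)
  have "tsum_list ((u # us) @ t # vs) = TAdd u (tsum_list (us @ t # vs))" by simp
  also have "\<dots> \<approx> TAdd u (TAdd t (tsum_list (us @ vs)))"
    by (rule tadd_cong, simp, rule Cons)
  also have "\<dots> \<approx> TAdd (TAdd u t) (tsum_list (us @ vs))"
    by (rule keq_sym, rule kp_eq.add_assoc)
  also have "\<dots> \<approx> TAdd (TAdd t u) (tsum_list (us @ vs))"
    by (rule tadd_cong, rule kp_eq.add_comm, simp)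
  also have "\<dots> \<approx> TAdd t (TAdd u (tsum_list (us @ vs)))" by (rule kp_eq.add_assoc)
  finally show ?case by simp
qed

lemma tsum_list_map_perm:
  "distinct ts \<Longrightarrow> distinct us \<Longrightarrow> set ts = set us \<Longrightarrow>
   tsum_list (map f ts) \<approx> tsum_list (map f us)"
proof (induction ts arbitrary: us)
  case Nil thus ?case by simp
next
  case (Cons t ts)
  have "t \<in> set (t # ts)" by simp
  hence "t \<in> set us" unfolding Cons.prems(3) .
  then obtain u1 u2 where us: "us = u1 @ t # u2" by (meson split_list)
  have d: "t \<notin> set ts" "distinct ts" using Cons.prems(1) by auto
  have "set ts = insert t (set ts) - {t}" using d by simp
  also have "\<dots> = set us - {t}" using Cons.prems(3) by simp
  also have "set us - {t} = set (u1 @ u2)" using Cons.prems(2) unfolding us by auto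
  finally have e: "set ts = set (u1 @ u2)" .
  have dd: "distinct (u1 @ u2)" using Cons.prems(2) unfolding us by simp
  have ih: "tsum_list (map f ts) \<approx> tsum_list (map f (u1 @ u2))"
    by (rule Cons.IH[OF d(2) dd e])
  have "tsum_list (map f (t # ts)) \<approx> TAdd (f t) (tsum_list (map f (u1 @ u2)))"
    unfolding list.map tsum_list.simps by (rule tadd_cong[OF keq_refl ih])
  also have "\<dots> \<approx> tsum_list (map f us)"
    unfolding us map_append list.map by (rule keq_sym, rule tsum_list_move)
  finally show ?case .
qed

lemma tprod_list_append:
  "xs \<noteq> [] \<Longrightarrow> ys \<noteq> [] \<Longrightarrow> tprod_list (xs @ ys) \<approx> TMul (tprod_list xs) (tprod_list ys)"
proof (induction xs rule: tprod_list.induct)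
  case 1 thus ?case by simp
next
  case (2 a) thus ?case by (cases ys) auto
next
  case (3 a b xs)
  have "tprod_list ((a # b # xs) @ ys) = TMul a (tprod_list ((b # xs) @ ys))" by simp
  also have "\<dots> \<approx> TMul a (TMul (tprod_list (b # xs)) (tprod_list ys))"
    using 3 by (intro tmul_cong_right) simp
  also have "\<dots> \<approx> TMul (TMul a (tprod_list (b # xs))) (tprod_list ys)"
    by (rule keq_sym, rule tmul_assoc)
  finally show ?case by simp
qed

lemma tprod_list_subst:
  assumes "ys \<noteq> []" "ys' \<noteq> []" "tprod_list ys \<approx> tprod_list ys'"
  shows "tprod_list (xs @ ys @ zs) \<approx> tprod_list (xs @ ys' @ zs)"
proof -
  have A: "tprod_list (ys @ zs) \<approx> tprod_list (ys' @ zs)"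
  proof (cases "zs = []")
    case True thus ?thesis using assms by simp
  next
    case False
    have "tprod_list (ys @ zs) \<approx> TMul (tprod_list ys) (tprod_list zs)"
      by (rule tprod_list_append[OF assms(1) False])
    also have "\<dots> \<approx> TMul (tprod_list ys') (tprod_list zs)"
      by (rule tmul_cong_left[OF assms(3)])
    also have "\<dots> \<approx> tprod_list (ys' @ zs)"
      by (rule keq_sym, rule tprod_list_append[OF assms(2) False])
    finally show ?thesis .
  qed
  show ?thesis
  proof (cases "xs = []")
    case True thus ?thesis using A by simp
  next
    case False
    have "tprod_list (xs @ ys @ zs) \<approx> TMul (tprod_list xs) (tprod_list (ys @ zs))"
      by (rule tprod_list_append[OF False]) (use assms in simp)
    also have "\<dots> \<approx> TMul (tprod_list xs) (tprod_list (ys' @ zs))"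
      by (rule tmul_cong_right[OF A])
    also have "\<dots> \<approx> tprod_list (xs @ ys' @ zs)"
      by (rule keq_sym, rule tprod_list_append[OF False]) (use assms in simp)
    finally show ?thesis .
  qed
qed

lemma tprod_list_zero: "tprod_list (xs @ [TZero] @ zs) \<approx> TZero"
proof -
  have A: "tprod_list ([TZero] @ zs) \<approx> TZero"
    by (cases zs) (auto simp: tmul_zero_left)
  show ?thesis
  proof (cases "xs = []")
    case True thus ?thesis using A by simp
  next
    case False
    have "tprod_list (xs @ [TZero] @ zs) \<approx> TMul (tprod_list xs) (tprod_list ([TZero] @ zs))"
      by (rule tprod_list_append[OF False]) simp
    also have "\<dots> \<approx> TMul (tprod_list xs) TZero" by (rule tmul_cong_right[OF A])
    also have "\<dots> \<approx> TZero" by (rule tmul_zero_right)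
    finally show ?thesis .
  qed
qed

lemma tprod_list_2_2: "TMul (TMul a b) (TMul c d) \<approx> tprod_list [a, b, c, d]"
  using tprod_list_append[of "[a,b]" "[c,d]"] by (simp add: keq_sym)

lemma tprod_list_2_1: "TMul (TMul a b) c \<approx> tprod_list [a, b, c]"
  by (simp add: tmul_assoc)

end

lemma kp_star_sT: "kp_star (sT G l) = sstT G l"
  and kp_star_sstT: "kp_star (sstT G l) = sT G l"
  by (simp_all add: sT_def sstT_def)

section \<open>The Kumjian--Pask relations for paths of all degrees\<close>

lemma distinct_set_singleton: "distinct xs \<Longrightarrow> set xs = {a} \<Longrightarrow> xs = [a]"
proof -
  assume d: "distinct xs" and s: "set xs = {a}"
  have "length xs = 1" using distinct_card[OF d] s by simp
  then obtain b where "xs = [b]" by (cases xs) auto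
  thus ?thesis using s by simp
qed

text \<open>Fixing the coefficient type makes it a fixed, not a schematic, type variable inside the
  locale, so that facts about terms can be chained into proofs with \<open>using\<close>.\<close>

locale kumjian_pask = k_graph k G for k and G :: "('v, 'a) kgraph" +
  fixes coefficients :: "'r::comm_ring_1 itself"
begin

abbreviation S :: "'a \<Rightarrow> ('v, 'a, 'r) kpterm" where "S \<mu> \<equiv> sT G \<mu>"

abbreviation Sst :: "'a \<Rightarrow> ('v, 'a, 'r) kpterm" where "Sst \<mu> \<equiv> sstT G \<mu>"

abbreviation P :: "'v \<Rightarrow> ('v, 'a, 'r) kpterm" where "P v \<equiv> pT v"

abbreviation Proj :: "'a \<Rightarrow> ('v, 'a, 'r) kpterm" where "Proj \<mu> \<equiv> TMul (S \<mu>) (Sst \<mu>)"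

lemma pT_idem: "v \<in> verts G \<Longrightarrow> TMul (P v) (P v) \<approx> P v"
  by (rule kp_eq.KP1_idem)

lemma pT_orth: "v \<in> verts G \<Longrightarrow> w \<in> verts G \<Longrightarrow> v \<noteq> w \<Longrightarrow> TMul (P v) (P w) \<approx> TZero"
  by (rule kp_eq.KP1_orth)

lemma tprod_list_contract:
  "TMul (a::('v,'a,'r) kpterm) b \<approx> c \<Longrightarrow> tprod_list (xs @ a # b # zs) \<approx> tprod_list (xs @ c # zs)"
  using tprod_list_subst[of "[a,b]" "[c]" xs zs] by simp

lemma tprod_list_contract_zero:
  "TMul (a::('v,'a,'r) kpterm) b \<approx> TZero \<Longrightarrow> tprod_list (xs @ a # b # zs) \<approx> TZero"
  using tprod_list_contract[of a b TZero xs zs] tprod_list_zero[of xs zs] keq_trans by simp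

lemma tprod_list_2_2_2:
  "TMul (TMul (TMul (a::('v,'a,'r) kpterm) b) (TMul c d)) (TMul e f) \<approx> tprod_list [a, b, c, d, e, f]"
proof -
  have "TMul (TMul (TMul a b) (TMul c d)) (TMul e f) \<approx> TMul (tprod_list [a,b,c,d]) (TMul e f)"
    by (rule tmul_cong_left, rule tprod_list_2_2)
  also have "\<dots> = TMul (tprod_list [a,b,c,d]) (tprod_list [e,f])" by simp
  also have "\<dots> \<approx> tprod_list ([a,b,c,d] @ [e,f])"
    by (rule keq_sym, rule tprod_list_append) auto
  finally show ?thesis by simp
qed

lemma sT_deg_zero: "deg G l = 0 \<Longrightarrow> S l = P (src G l)"
  and sstT_deg_zero: "deg G l = 0 \<Longrightarrow> Sst l = P (src G l)"
  by (simp_all add: sT_def sstT_def pT_def)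

lemma pT_rng_sT:
  assumes "l \<in> paths G"
  shows "TMul (P (rng G l)) (S l) \<approx> S l"
proof (cases "deg G l = 0")
  case True
  have "rng G l = src G l" using deg_zero_src assms True by simp
  thus ?thesis using sT_deg_zero[OF True] pT_idem src_in_verts assms by simp
qed (rule kp_eq.KP2_pr_s[OF assms])

lemma sT_pT_src:
  assumes "l \<in> paths G"
  shows "TMul (S l) (P (src G l)) \<approx> S l"
proof (cases "deg G l = 0")
  case True thus ?thesis using sT_deg_zero[OF True] pT_idem src_in_verts assms by simp
qed (rule kp_eq.KP2_s_ps[OF assms])

lemma pT_src_sstT:
  assumes "l \<in> paths G"
  shows "TMul (P (src G l)) (Sst l) \<approx> Sst l"
proof (cases "deg G l = 0")
  case True thus ?thesis using sstT_deg_zero[OF True] pT_idem src_in_verts assms by simp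
qed (rule kp_eq.KP2_ps_sst[OF assms])

lemma sstT_pT_rng:
  assumes "l \<in> paths G"
  shows "TMul (Sst l) (P (rng G l)) \<approx> Sst l"
proof (cases "deg G l = 0")
  case True
  have "rng G l = src G l" using deg_zero_src assms True by simp
  thus ?thesis using sstT_deg_zero[OF True] pT_idem src_in_verts assms by simp
qed (rule kp_eq.KP2_sst_pr[OF assms])

lemma sT_comp:
  assumes "l \<in> paths G" "m \<in> paths G" "src G l = rng G m"
  shows "TMul (S l) (S m) \<approx> S (comp G l m)"
proof (cases "deg G l = 0")
  case True
  have l: "l = ident G (rng G m)" using deg_zero_ident_src[OF assms(1) True] assms by simp
  have "comp G l m = m" using comp_ident_left[OF assms(2)] l by simp
  moreover have "S l = P (rng G m)" using sT_deg_zero[OF True] assms by simp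
  ultimately show ?thesis using pT_rng_sT[OF assms(2)] by simp
next
  case F: False
  show ?thesis
  proof (cases "deg G m = 0")
    case True
    have m: "m = ident G (src G l)" using deg_zero_ident[OF assms(2) True] assms by simp
    have "comp G l m = l" using comp_ident_right[OF assms(1)] m by simp
    moreover have "S m = P (src G l)"
      using sT_deg_zero[OF True] deg_zero_src[OF assms(2) True] assms by simp
    ultimately show ?thesis using sT_pT_src[OF assms(1)] by simp
  next
    case False show ?thesis by (rule kp_eq.KP2_s[OF assms(1,2) F False assms(3)[symmetric]])
  qed
qed

lemma sstT_comp:
  assumes "l \<in> paths G" "m \<in> paths G" "src G l = rng G m"
  shows "TMul (Sst m) (Sst l) \<approx> Sst (comp G l m)"
proof (cases "deg G l = 0")
  case True
  have l: "l = ident G (rng G m)" using deg_zero_ident_src[OF assms(1) True] assms by simp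
  have "comp G l m = m" using comp_ident_left[OF assms(2)] l by simp
  moreover have "Sst l = P (rng G m)" using sstT_deg_zero[OF True] assms by simp
  ultimately show ?thesis using sstT_pT_rng[OF assms(2)] by simp
next
  case F: False
  show ?thesis
  proof (cases "deg G m = 0")
    case True
    have m: "m = ident G (src G l)" using deg_zero_ident[OF assms(2) True] assms by simp
    have "comp G l m = l" using comp_ident_right[OF assms(1)] m by simp
    moreover have "Sst m = P (src G l)"
      using sstT_deg_zero[OF True] deg_zero_src[OF assms(2) True] assms by simp
    ultimately show ?thesis using pT_src_sstT[OF assms(1)] by simp
  next
    case False show ?thesis by (rule kp_eq.KP2_sst[OF assms(1,2) F False assms(3)[symmetric]])
  qed
qed

lemma sstT_sT:
  assumes "l \<in> paths G" "m \<in> paths G" "deg G l = deg G m"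
  shows "TMul (Sst l) (S m) \<approx> (if l = m then P (src G l) else TZero)"
proof (cases "deg G l = 0")
  case True
  have m0: "deg G m = 0" using True assms by simp
  have e: "Sst l = P (src G l)" "S m = P (src G m)"
    using sstT_deg_zero[OF True] sT_deg_zero[OF m0] by auto
  show ?thesis
  proof (cases "l = m")
    case True thus ?thesis using e pT_idem src_in_verts assms by simp
  next
    case False
    have "src G l \<noteq> src G m"
      using False deg_zero_ident_src[OF assms(1) True] deg_zero_ident_src[OF assms(2) m0] by metis
    thus ?thesis using e False pT_orth src_in_verts assms by simp
  qed
next
  case False show ?thesis by (rule kp_eq.KP3[OF assms(1,2) False assms(3)])
qed

lemma pT_eq_tsum_Proj:
  assumes "v \<in> verts G" "n \<in> Nk k" "distinct xs" "set xs = paths_from v n"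
  shows "P v \<approx> tsum_list (map Proj xs)"
proof (cases "n = 0")
  case True
  have "paths_from v n = {ident G v}"
    using deg_zero_ident ident_in_paths assms True by auto
  hence xs: "xs = [ident G v]" using distinct_set_singleton assms by simp
  have s: "S (ident G v) = P v" "Sst (ident G v) = P v"
    using sT_deg_zero sstT_deg_zero assms by simp_all
  have "P v \<approx> TMul (P v) (P v)" by (rule keq_sym, rule pT_idem[OF assms(1)])
  also have "\<dots> \<approx> TAdd (TMul (P v) (P v)) TZero" by (rule keq_sym, rule kp_eq.add_zero)
  finally show ?thesis using xs s by simp
next
  case False show ?thesis by (rule kp_eq.KP4[OF assms(1,2) False assms(3,4)])
qed

lemma sT_sstT_expand:
  assumes "\<kappa> \<in> paths G" "\<mu> \<in> paths G" "src G \<kappa> = src G \<mu>" "n \<in> Nk k"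
    "distinct xs" "set xs = paths_from (src G \<kappa>) n"
  shows "TMul (S \<kappa>) (Sst \<mu>) \<approx> tsum_list (map (\<lambda>d. TMul (S (comp G \<kappa> d)) (Sst (comp G \<mu> d))) xs)"
proof -
  have "TMul (S \<kappa>) (Sst \<mu>) \<approx> TMul (S \<kappa>) (TMul (P (src G \<kappa>)) (Sst \<mu>))"
    using pT_src_sstT[OF assms(2)] assms(3) by (simp add: tmul_cong_right keq_sym)
  also have "\<dots> \<approx> TMul (S \<kappa>) (TMul (tsum_list (map Proj xs)) (Sst \<mu>))"
    by (intro tmul_cong_right tmul_cong_left pT_eq_tsum_Proj[OF src_in_verts[OF assms(1)] assms(4-6)])
  also have "\<dots> \<approx> TMul (S \<kappa>) (tsum_list (map (\<lambda>t. TMul t (Sst \<mu>)) (map Proj xs)))"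
    by (rule tmul_cong_right, rule tsum_list_tmul)
  also have "\<dots> \<approx> tsum_list (map (TMul (S \<kappa>)) (map (\<lambda>t. TMul t (Sst \<mu>)) (map Proj xs)))"
    by (rule tmul_tsum_list)
  also have "\<dots> = tsum_list (map (\<lambda>d. TMul (S \<kappa>) (TMul (Proj d) (Sst \<mu>))) xs)"
    by (induct xs) simp_all
  also have "\<dots> \<approx> tsum_list (map (\<lambda>d. TMul (S (comp G \<kappa> d)) (Sst (comp G \<mu> d))) xs)"
  proof (rule tsum_list_cong)
    fix d assume "d \<in> set xs"
    hence d: "d \<in> paths G" "rng G d = src G \<kappa>" "rng G d = src G \<mu>"
      using assms by auto
    have "TMul (S \<kappa>) (TMul (Proj d) (Sst \<mu>)) \<approx> tprod_list [S \<kappa>, S d, Sst d, Sst \<mu>]"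
      by (simp add: tmul_cong_right tmul_assoc)
    also have "\<dots> \<approx> tprod_list [S \<kappa>, S d, Sst (comp G \<mu> d)]"
      using tprod_list_contract[OF sstT_comp[OF assms(2) d(1) d(3)[symmetric]], of "[S \<kappa>, S d]" "[]"]
      by simp
    also have "\<dots> \<approx> tprod_list [S (comp G \<kappa> d), Sst (comp G \<mu> d)]"
      using tprod_list_contract[OF sT_comp[OF assms(1) d(1) d(2)[symmetric]], of "[]" "[Sst (comp G \<mu> d)]"]
      by simp
    finally show "TMul (S \<kappa>) (TMul (Proj d) (Sst \<mu>)) \<approx> TMul (S (comp G \<kappa> d)) (Sst (comp G \<mu> d))"
      by simp
  qed
  finally show ?thesis .
qed

lemma sstT_Proj:
  assumes "\<nu> \<in> paths G" "\<mu> \<in> paths G" "deg G \<mu> \<le> deg G \<nu>"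
  shows "TMul (Sst \<nu>) (Proj \<mu>) \<approx> (if prefix_at \<nu> (deg G \<mu>) = \<mu> then Sst \<nu> else TZero)"
proof -
  note f = prefix_suffix_at[OF assms(1) assms(3)]
  let ?r = "prefix_at \<nu> (deg G \<mu>)" and ?t = "suffix_at \<nu> (deg G \<mu>)"
  have sn: "TMul (Sst ?t) (Sst ?r) \<approx> Sst \<nu>" using sstT_comp[OF f(1,2,3)] f(6) by simp
  have "TMul (Sst \<nu>) (Proj \<mu>) \<approx> TMul (TMul (Sst ?t) (Sst ?r)) (Proj \<mu>)"
    by (rule tmul_cong_left, rule keq_sym, rule sn)
  also have "\<dots> \<approx> tprod_list [Sst ?t, Sst ?r, S \<mu>, Sst \<mu>]"
    by (rule tprod_list_2_2)
  finally have A: "TMul (Sst \<nu>) (Proj \<mu>) \<approx> tprod_list [Sst ?t, Sst ?r, S \<mu>, Sst \<mu>]" .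
  note b4 = sstT_sT[OF f(1) assms(2)] f(4)
  show ?thesis
  proof (cases "?r = \<mu>")
    case True
    have "tprod_list [Sst ?t, Sst ?r, S \<mu>, Sst \<mu>] \<approx> tprod_list [Sst ?t, P (src G \<mu>), Sst \<mu>]"
      using tprod_list_contract[of "Sst ?r" "S \<mu>" "P (src G \<mu>)" "[Sst ?t]" "[Sst \<mu>]"] b4 True
      by simp
    also have "\<dots> \<approx> tprod_list [Sst ?t, Sst \<mu>]"
      using tprod_list_contract[OF pT_src_sstT[OF assms(2)], of "[Sst ?t]" "[]"] by simp
    also have "\<dots> \<approx> Sst \<nu>" using sn True by simp
    finally show ?thesis using A True keq_trans by simp
  next
    case False
    have "tprod_list [Sst ?t, Sst ?r, S \<mu>, Sst \<mu>] \<approx> TZero"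
      using tprod_list_contract_zero[of "Sst ?r" "S \<mu>" "[Sst ?t]" "[Sst \<mu>]"] b4 False
      by simp
    thus ?thesis using A False keq_trans by simp
  qed
qed

lemma Proj_sT:
  assumes "\<nu> \<in> paths G" "\<mu> \<in> paths G" "deg G \<mu> \<le> deg G \<nu>"
  shows "TMul (Proj \<mu>) (S \<nu>) \<approx> (if prefix_at \<nu> (deg G \<mu>) = \<mu> then S \<nu> else TZero)"
proof -
  note f = prefix_suffix_at[OF assms(1) assms(3)]
  let ?r = "prefix_at \<nu> (deg G \<mu>)" and ?t = "suffix_at \<nu> (deg G \<mu>)"
  have sn: "TMul (S ?r) (S ?t) \<approx> S \<nu>" using sT_comp[OF f(1,2,3)] f(6) by simp
  have "TMul (Proj \<mu>) (S \<nu>) \<approx> TMul (Proj \<mu>) (TMul (S ?r) (S ?t))"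
    by (rule tmul_cong_right, rule keq_sym, rule sn)
  also have "\<dots> \<approx> tprod_list [S \<mu>, Sst \<mu>, S ?r, S ?t]" by (rule tprod_list_2_2)
  finally have A: "TMul (Proj \<mu>) (S \<nu>) \<approx> tprod_list [S \<mu>, Sst \<mu>, S ?r, S ?t]" .
  note b4 = sstT_sT[OF assms(2) f(1)] f(4)
  show ?thesis
  proof (cases "?r = \<mu>")
    case True
    have rt: "rng G ?t = src G \<mu>" using f(3) True by simp
    have "tprod_list [S \<mu>, Sst \<mu>, S ?r, S ?t] \<approx> tprod_list [S \<mu>, P (src G \<mu>), S ?t]"
      using tprod_list_contract[of "Sst \<mu>" "S ?r" "P (src G \<mu>)" "[S \<mu>]" "[S ?t]"] b4 True
      by simp
    also have "\<dots> \<approx> tprod_list [S \<mu>, S ?t]"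
      using tprod_list_contract[OF pT_rng_sT[OF f(2)], of "[S \<mu>]" "[]"] rt by simp
    also have "\<dots> \<approx> S \<nu>" using sn True by simp
    finally show ?thesis using A True keq_trans by simp
  next
    case False
    have "tprod_list [S \<mu>, Sst \<mu>, S ?r, S ?t] \<approx> TZero"
      using tprod_list_contract_zero[of "Sst \<mu>" "S ?r" "[S \<mu>]" "[S ?t]"] b4 False by auto
    thus ?thesis using A False keq_trans by simp
  qed
qed

lemma sT_sstT_mul_adjoint:
  assumes "l \<in> paths G" "m \<in> paths G" "src G l = src G m"
  shows "TMul (TMul (S l) (Sst m)) (TMul (S m) (Sst l)) \<approx> Proj l"
proof -
  have "TMul (TMul (S l) (Sst m)) (TMul (S m) (Sst l)) \<approx> tprod_list [S l, Sst m, S m, Sst l]"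
    by (rule tprod_list_2_2)
  also have "\<dots> \<approx> tprod_list [S l, P (src G m), Sst l]"
    using tprod_list_contract[of "Sst m" "S m" "P (src G m)" "[S l]" "[Sst l]"]
      sstT_sT[OF assms(2) assms(2)]
      by simp
  also have "\<dots> \<approx> tprod_list [S l, Sst l]"
    using tprod_list_contract[OF pT_src_sstT[OF assms(1)], of "[S l]" "[]"] assms(3) by simp
  finally show ?thesis by simp
qed

lemma sstT_sT_comp:
  assumes "\<beta> \<in> paths G" "\<gamma> \<in> paths G" "src G \<beta> = rng G \<gamma>"
  shows "TMul (Sst \<beta>) (S (comp G \<beta> \<gamma>)) \<approx> S \<gamma>"
proof -
  have "TMul (Sst \<beta>) (S (comp G \<beta> \<gamma>)) \<approx> TMul (Sst \<beta>) (TMul (S \<beta>) (S \<gamma>))"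
    by (rule tmul_cong_right, rule keq_sym, rule sT_comp[OF assms])
  also have "\<dots> = tprod_list [Sst \<beta>, S \<beta>, S \<gamma>]" by simp
  also have "\<dots> \<approx> tprod_list [P (src G \<beta>), S \<gamma>]"
    using tprod_list_contract[of "Sst \<beta>" "S \<beta>" "P (src G \<beta>)" "[]" "[S \<gamma>]"]
      sstT_sT[OF assms(1) assms(1)]
      by simp
  also have "\<dots> \<approx> S \<gamma>" using pT_rng_sT[OF assms(2)] assms(3) by simp
  finally show ?thesis .
qed

lemma sstT_comp_sT:
  assumes "\<beta> \<in> paths G" "\<gamma> \<in> paths G" "src G \<beta> = rng G \<gamma>"
  shows "TMul (Sst (comp G \<beta> \<gamma>)) (S \<beta>) \<approx> Sst \<gamma>"
proof -
  have "TMul (Sst (comp G \<beta> \<gamma>)) (S \<beta>) \<approx> TMul (TMul (Sst \<gamma>) (Sst \<beta>)) (S \<beta>)"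
    by (rule tmul_cong_left, rule keq_sym, rule sstT_comp[OF assms])
  also have "\<dots> \<approx> tprod_list [Sst \<gamma>, Sst \<beta>, S \<beta>]" by (rule tprod_list_2_1)
  also have "\<dots> \<approx> tprod_list [Sst \<gamma>, P (src G \<beta>)]"
    using tprod_list_contract[of "Sst \<beta>" "S \<beta>" "P (src G \<beta>)" "[Sst \<gamma>]" "[]"]
      sstT_sT[OF assms(1) assms(1)]
      by simp
  also have "\<dots> \<approx> Sst \<gamma>" using sstT_pT_rng[OF assms(2)] assms(3) by simp
  finally show ?thesis .
qed

lemma sT_sstT_comp_mul_Proj:
  assumes "\<alpha> \<in> paths G" "\<beta> \<in> paths G" "src G \<alpha> = src G \<beta>" "\<mu> \<in> paths G"
    "\<gamma> \<in> paths G" "rng G \<gamma> = src G \<alpha>" "deg G \<gamma> = deg G \<mu>"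
  shows "TMul (TMul (S (comp G \<alpha> \<gamma>)) (Sst (comp G \<beta> \<gamma>))) (Proj \<mu>) \<approx>
    (if prefix_at (comp G \<beta> \<gamma>) (deg G \<mu>) = \<mu> then TMul (S (comp G \<alpha> \<gamma>)) (Sst (comp G \<beta> \<gamma>))
     else TZero)"
proof -
  have bg: "comp G \<beta> \<gamma> \<in> paths G" "deg G \<mu> \<le> deg G (comp G \<beta> \<gamma>)"
    using comp_in_paths assms le_add_fun2 by auto
  have "TMul (TMul (S (comp G \<alpha> \<gamma>)) (Sst (comp G \<beta> \<gamma>))) (Proj \<mu>) \<approx>
      TMul (S (comp G \<alpha> \<gamma>)) (TMul (Sst (comp G \<beta> \<gamma>)) (Proj \<mu>))"
    by (rule tmul_assoc)
  also have "\<dots> \<approx> TMul (S (comp G \<alpha> \<gamma>))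
      (if prefix_at (comp G \<beta> \<gamma>) (deg G \<mu>) = \<mu> then Sst (comp G \<beta> \<gamma>) else TZero)"
    by (rule tmul_cong_right, rule sstT_Proj[OF bg(1) assms(4) bg(2)])
  also have "\<dots> \<approx> (if prefix_at (comp G \<beta> \<gamma>) (deg G \<mu>) = \<mu>
      then TMul (S (comp G \<alpha> \<gamma>)) (Sst (comp G \<beta> \<gamma>)) else TZero)"
    by (auto simp: tmul_zero_right)
  finally show ?thesis .
qed

lemma Proj_mul_sT_sstT_comp:
  assumes "\<alpha> \<in> paths G" "\<beta> \<in> paths G" "src G \<alpha> = src G \<beta>" "\<mu> \<in> paths G"
    "\<gamma> \<in> paths G" "rng G \<gamma> = src G \<alpha>" "deg G \<gamma> = deg G \<mu>"
  shows "TMul (Proj \<mu>) (TMul (S (comp G \<alpha> \<gamma>)) (Sst (comp G \<beta> \<gamma>))) \<approx>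
    (if prefix_at (comp G \<alpha> \<gamma>) (deg G \<mu>) = \<mu> then TMul (S (comp G \<alpha> \<gamma>)) (Sst (comp G \<beta> \<gamma>))
     else TZero)"
proof -
  have ag: "comp G \<alpha> \<gamma> \<in> paths G" "deg G \<mu> \<le> deg G (comp G \<alpha> \<gamma>)"
    using comp_in_paths assms le_add_fun2 by auto
  have "TMul (Proj \<mu>) (TMul (S (comp G \<alpha> \<gamma>)) (Sst (comp G \<beta> \<gamma>))) \<approx>
      TMul (TMul (Proj \<mu>) (S (comp G \<alpha> \<gamma>))) (Sst (comp G \<beta> \<gamma>))"
    by (rule keq_sym, rule tmul_assoc)
  also have "\<dots> \<approx> TMul (if prefix_at (comp G \<alpha> \<gamma>) (deg G \<mu>) = \<mu> then S (comp G \<alpha> \<gamma>) else TZero)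
      (Sst (comp G \<beta> \<gamma>))"
    by (rule tmul_cong_left, rule Proj_sT[OF ag(1) assms(4) ag(2)])
  also have "\<dots> \<approx> (if prefix_at (comp G \<alpha> \<gamma>) (deg G \<mu>) = \<mu>
      then TMul (S (comp G \<alpha> \<gamma>)) (Sst (comp G \<beta> \<gamma>)) else TZero)"
    by (auto simp: tmul_zero_left)
  finally show ?thesis .
qed

lemma commutes_kp_D:
  assumes "\<And>m. m \<in> paths G \<Longrightarrow> TMul a (Proj m) \<approx> TMul (Proj m) a" "t \<in> kp_D G"
  shows "TMul a t \<approx> TMul t a"
  using assms(2)
proof (induction rule: kp_D.induct)
  case (gen m) thus ?case using assms(1) by simp
next
  case zero
  have "TMul a TZero \<approx> TZero" by (rule tmul_zero_right)
  also have "TZero \<approx> TMul TZero a" by (rule keq_sym, rule tmul_zero_left)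
  finally show ?case .
next
  case (add x y)
  have "TMul a (TAdd x y) \<approx> TAdd (TMul a x) (TMul a y)" by (rule kp_eq.distrib_l)
  also have "\<dots> \<approx> TAdd (TMul x a) (TMul y a)" by (rule tadd_cong[OF add.IH])
  also have "\<dots> \<approx> TMul (TAdd x y) a" by (rule keq_sym, rule kp_eq.distrib_r)
  finally show ?case .
next
  case (neg x)
  have "TMul a (TNeg x) \<approx> TNeg (TMul a x)" by (rule tmul_neg_right)
  also have "\<dots> \<approx> TNeg (TMul x a)" by (rule kp_eq.cong_neg[OF neg.IH])
  also have "\<dots> \<approx> TMul (TNeg x) a" by (rule keq_sym, rule tmul_neg_left)
  finally show ?case .
next
  case (mul x y)
  have "TMul a (TMul x y) \<approx> TMul (TMul a x) y" by (rule keq_sym, rule tmul_assoc)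
  also have "\<dots> \<approx> TMul (TMul x a) y" by (rule tmul_cong_left[OF mul.IH(1)])
  also have "\<dots> \<approx> TMul x (TMul a y)" by (rule tmul_assoc)
  also have "\<dots> \<approx> TMul x (TMul y a)" by (rule tmul_cong_right[OF mul.IH(2)])
  also have "\<dots> \<approx> TMul (TMul x y) a" by (rule keq_sym, rule tmul_assoc)
  finally show ?case .
next
  case (smul x r)
  have "TMul a (TSmul r x) \<approx> TSmul r (TMul a x)" by (rule keq_sym, rule kp_eq.smul_mul_r)
  also have "\<dots> \<approx> TSmul r (TMul x a)" by (rule kp_eq.cong_smul[OF smul.IH])
  also have "\<dots> \<approx> TMul (TSmul r x) a" by (rule kp_eq.smul_mul_l)
  finally show ?case .
qed

lemma Proj_comp_eq_if_commutes:
  assumes "\<alpha> \<in> paths G" "\<beta> \<in> paths G" "src G \<alpha> = src G \<beta>"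
    "Proj \<alpha> \<approx> Proj \<beta>"
    "\<And>m. m \<in> paths G \<Longrightarrow> TMul (TMul (S \<alpha>) (Sst \<beta>)) (Proj m) \<approx> TMul (Proj m) (TMul (S \<alpha>) (Sst \<beta>))"
    "\<gamma> \<in> paths G" "rng G \<gamma> = src G \<alpha>"
  shows "Proj (comp G \<alpha> \<gamma>) \<approx> Proj (comp G \<beta> \<gamma>)"
proof -
  let ?a = "TMul (S \<alpha>) (Sst \<beta>)" and ?as = "TMul (S \<beta>) (Sst \<alpha>)" and ?bg = "comp G \<beta> \<gamma>"
  have g2: "src G \<beta> = rng G \<gamma>" using assms by simp
  have g1: "src G \<alpha> = rng G \<gamma>" using assms by simp
  have bg: "?bg \<in> paths G" using comp_in_paths assms g2 by simp
  txt \<open>Evaluate \<open>a s\<^bsub>\<beta>\<gamma>\<^esub>s\<^bsub>(\<beta>\<gamma>)\<^sup>*\<^esub> a\<^sup>*\<close> by the relations and by commuting \<open>a\<close> past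
    the projection.\<close>
  let ?X = "TMul (TMul ?a (Proj ?bg)) ?as"
  have "?X \<approx> tprod_list [S \<alpha>, Sst \<beta>, S ?bg, Sst ?bg, S \<beta>, Sst \<alpha>]"
    by (rule tprod_list_2_2_2)
  also have "\<dots> \<approx> tprod_list [S \<alpha>, S \<gamma>, Sst ?bg, S \<beta>, Sst \<alpha>]"
    using tprod_list_contract[OF sstT_sT_comp[OF assms(2) assms(6) g2], of "[S \<alpha>]" "[Sst ?bg, S \<beta>, Sst \<alpha>]"]
    by simp
  also have "\<dots> \<approx> tprod_list [S \<alpha>, S \<gamma>, Sst \<gamma>, Sst \<alpha>]"
    using tprod_list_contract[OF sstT_comp_sT[OF assms(2) assms(6) g2], of "[S \<alpha>, S \<gamma>]" "[Sst \<alpha>]"]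
    by simp
  also have "\<dots> \<approx> tprod_list [S (comp G \<alpha> \<gamma>), Sst \<gamma>, Sst \<alpha>]"
    using tprod_list_contract[OF sT_comp[OF assms(1) assms(6) g1], of "[]" "[Sst \<gamma>, Sst \<alpha>]"]
    by simp
  also have "\<dots> \<approx> tprod_list [S (comp G \<alpha> \<gamma>), Sst (comp G \<alpha> \<gamma>)]"
    using tprod_list_contract[OF sstT_comp[OF assms(1) assms(6) g1], of "[S (comp G \<alpha> \<gamma>)]" "[]"]
    by simp
  finally have X1: "?X \<approx> Proj (comp G \<alpha> \<gamma>)" by simp
  have "?X \<approx> TMul (TMul (Proj ?bg) ?a) ?as" by (rule tmul_cong_left[OF assms(5)[OF bg]])
  also have "\<dots> \<approx> TMul (Proj ?bg) (TMul ?a ?as)" by (rule tmul_assoc)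
  also have "\<dots> \<approx> TMul (Proj ?bg) (Proj \<alpha>)"
    by (rule tmul_cong_right, rule sT_sstT_mul_adjoint[OF assms(1,2,3)])
  also have "\<dots> \<approx> TMul (Proj ?bg) (Proj \<beta>)"
    by (rule tmul_cong_right, rule assms(4))
  also have "\<dots> \<approx> tprod_list [S ?bg, Sst ?bg, S \<beta>, Sst \<beta>]"
    by (rule tprod_list_2_2)
  also have "\<dots> \<approx> tprod_list [S ?bg, Sst \<gamma>, Sst \<beta>]"
    using tprod_list_contract[OF sstT_comp_sT[OF assms(2) assms(6) g2], of "[S ?bg]" "[Sst \<beta>]"]
    by simp
  also have "\<dots> \<approx> tprod_list [S ?bg, Sst ?bg]"
    using tprod_list_contract[OF sstT_comp[OF assms(2) assms(6) g2], of "[S ?bg]" "[]"] by simp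
  finally have X2: "?X \<approx> Proj ?bg" by simp
  show ?thesis using X1 X2 keq_sym keq_trans by blast
qed

lemma Proj_comp_eq_if_normal_commuting:
  assumes "\<alpha> \<in> paths G" "\<beta> \<in> paths G" "src G \<alpha> = src G \<beta>"
  defines "a \<equiv> TMul (S \<alpha>) (Sst \<beta>)"
  assumes "TMul a (kp_star a) \<approx> TMul (kp_star a) a" "\<forall>t\<in>kp_D G. TMul a t \<approx> TMul t a"
  shows "\<forall>\<gamma>\<in>paths G. rng G \<gamma> = src G \<alpha> \<longrightarrow> Proj (comp G \<alpha> \<gamma>) \<approx> Proj (comp G \<beta> \<gamma>)"
proof -
  have "Proj \<alpha> \<approx> Proj \<beta>"
    using assms(5) sT_sstT_mul_adjoint[OF assms(1-3)]
      sT_sstT_mul_adjoint[OF assms(2,1) assms(3)[symmetric]]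
    unfolding a_def by (simp add: kp_star_sT kp_star_sstT) (metis keq_sym keq_trans)
  moreover have "TMul a (Proj \<mu>) \<approx> TMul (Proj \<mu>) a" if "\<mu> \<in> paths G" for \<mu>
    using assms(6) kp_D.gen[OF that] by blast
  ultimately show ?thesis using Proj_comp_eq_if_commutes[OF assms(1-3)] unfolding a_def by blast
qed

end

section \<open>The three conditions\<close>

locale row_finite_kumjian_pask = kumjian_pask k G coefficients + row_finite_k_graph k G
  for k and G :: "('v, 'a) kgraph" and coefficients :: "'r::comm_ring_1 itself"
begin

lemma Proj_comp_eq_if_tails_agree:
  assumes "tails_agree \<alpha> \<beta>" "\<alpha> \<in> paths G" "\<beta> \<in> paths G" "src G \<alpha> = src G \<beta>"
    "\<gamma> \<in> paths G" "rng G \<gamma> = src G \<alpha>"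
  shows "Proj (comp G \<alpha> \<gamma>) \<approx> Proj (comp G \<beta> \<gamma>)"
proof -
  let ?l = "comp G \<alpha> \<gamma>" and ?m = "comp G \<beta> \<gamma>"
  have lm: "?l \<in> paths G" "?m \<in> paths G" "src G ?l = src G \<gamma>" "src G ?m = src G \<gamma>"
    using comp_in_paths assms by auto
  have sg: "src G \<gamma> \<in> verts G" using src_in_verts assms by simp
  obtain xs where xs: "distinct xs" "set xs = paths_from (src G \<gamma>) (deg G ?m)"
    using ex_distinct_list_paths_from[OF sg deg_in_Nk[OF lm(2)]] by blast
  obtain ys where ys: "distinct ys" "set ys = paths_from (src G \<gamma>) (deg G ?l)"
    using ex_distinct_list_paths_from[OF sg deg_in_Nk[OF lm(1)]] by blast
  have "Proj ?l \<approx> tsum_list (map (\<lambda>d. Proj (comp G ?l d)) xs)"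
    using sT_sstT_expand[OF lm(1) lm(1) HOL.refl deg_in_Nk[OF lm(2)] xs(1)] xs(2) lm(3) by simp
  also have "\<dots> = tsum_list (map Proj (map (comp G ?l) xs))" by (simp add: o_def)
  also have "\<dots> \<approx> tsum_list (map Proj (map (comp G ?m) ys))"
  proof (rule tsum_list_map_perm)
    show "distinct (map (comp G ?l) xs)" "distinct (map (comp G ?m) ys)"
      using xs ys inj_on_comp_paths_from[OF lm(1)] inj_on_comp_paths_from[OF lm(2)] lm(3,4)
      by (simp_all add: distinct_map)
    show "set (map (comp G ?l) xs) = set (map (comp G ?m) ys)"
      using comp_image_eq_if_tails_agree[OF assms] xs(2) ys(2) by simp
  qed
  also have "\<dots> = tsum_list (map (\<lambda>d. Proj (comp G ?m d)) ys)" by (simp add: o_def)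
  also have "\<dots> \<approx> Proj ?m"
    using sT_sstT_expand[OF lm(2) lm(2) HOL.refl deg_in_Nk[OF lm(1)] ys(1)] ys(2) lm(4)
    by (simp add: keq_sym)
  finally show ?thesis .
qed

lemma sT_sstT_commutes_Proj:
  assumes "tails_agree \<alpha> \<beta>" "\<alpha> \<in> paths G" "\<beta> \<in> paths G" "src G \<alpha> = src G \<beta>" "\<mu> \<in> paths G"
  shows "TMul (TMul (S \<alpha>) (Sst \<beta>)) (Proj \<mu>) \<approx> TMul (Proj \<mu>) (TMul (S \<alpha>) (Sst \<beta>))"
proof -
  obtain xs where xs: "distinct xs" "set xs = paths_from (src G \<alpha>) (deg G \<mu>)"
    using ex_distinct_list_paths_from[OF src_in_verts deg_in_Nk] assms by blast
  let ?t = "\<lambda>\<gamma>. TMul (S (comp G \<alpha> \<gamma>)) (Sst (comp G \<beta> \<gamma>))"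
  let ?f = "\<lambda>\<gamma>. if prefix_at (comp G \<alpha> \<gamma>) (deg G \<mu>) = \<mu> then ?t \<gamma> else TZero"
  have expand: "TMul (S \<alpha>) (Sst \<beta>) \<approx> tsum_list (map ?t xs)"
    by (rule sT_sstT_expand[OF assms(2,3,4) deg_in_Nk[OF assms(5)] xs])
  have \<gamma>: "\<gamma> \<in> paths G" "rng G \<gamma> = src G \<alpha>" "deg G \<gamma> = deg G \<mu>" if "\<gamma> \<in> set xs" for \<gamma>
    using xs that by auto
  have "prefix_at (comp G \<beta> \<gamma>) (deg G \<mu>) = prefix_at (comp G \<alpha> \<gamma>) (deg G \<mu>)"
    if "\<gamma> \<in> set xs" for \<gamma>
    using tails_agree_prefix_at[OF assms(1-4) \<gamma>(1,2)[OF that]] \<gamma>[OF that] le_add_fun2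
    by simp
  then have left: "TMul (?t \<gamma>) (Proj \<mu>) \<approx> ?f \<gamma>" if "\<gamma> \<in> set xs" for \<gamma>
    using sT_sstT_comp_mul_Proj[OF assms(2-5) \<gamma>[OF that]] that by simp
  have right: "TMul (Proj \<mu>) (?t \<gamma>) \<approx> ?f \<gamma>" if "\<gamma> \<in> set xs" for \<gamma>
    using Proj_mul_sT_sstT_comp[OF assms(2-5) \<gamma>[OF that]] .
  have "TMul (TMul (S \<alpha>) (Sst \<beta>)) (Proj \<mu>) \<approx> TMul (tsum_list (map ?t xs)) (Proj \<mu>)"
    by (rule tmul_cong_left[OF expand])
  also have "\<dots> \<approx> tsum_list (map (\<lambda>\<gamma>. TMul (?t \<gamma>) (Proj \<mu>)) xs)"
    using tsum_list_tmul[of "map ?t xs" "Proj \<mu>"] by (simp add: o_def)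
  also have "\<dots> \<approx> tsum_list (map ?f xs)" by (rule tsum_list_cong) (rule left)
  also have "\<dots> \<approx> tsum_list (map (\<lambda>\<gamma>. TMul (Proj \<mu>) (?t \<gamma>)) xs)"
    by (rule keq_sym, rule tsum_list_cong) (rule right)
  also have "\<dots> \<approx> TMul (Proj \<mu>) (tsum_list (map ?t xs))"
    using keq_sym[OF tmul_tsum_list[of "Proj \<mu>" "map ?t xs"]] by (simp add: o_def)
  also have "\<dots> \<approx> TMul (Proj \<mu>) (TMul (S \<alpha>) (Sst \<beta>))"
    by (rule tmul_cong_right[OF keq_sym[OF expand]])
  finally show ?thesis .
qed

lemma normal_commuting_if_tails_agree:
  assumes "tails_agree \<alpha> \<beta>" "\<alpha> \<in> paths G" "\<beta> \<in> paths G" "src G \<alpha> = src G \<beta>"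
  defines "a \<equiv> TMul (S \<alpha>) (Sst \<beta>)"
  shows "TMul a (kp_star a) \<approx> TMul (kp_star a) a \<and> (\<forall>t\<in>kp_D G. TMul a t \<approx> TMul t a)"
proof
  have "Proj (comp G \<alpha> (ident G (src G \<alpha>))) \<approx> Proj (comp G \<beta> (ident G (src G \<alpha>)))"
    using Proj_comp_eq_if_tails_agree[OF assms(1-4)] ident_in_paths src_in_verts assms(2) by simp
  then have "Proj \<alpha> \<approx> Proj \<beta>"
    using comp_ident_right[OF assms(2)] comp_ident_right[OF assms(3)] assms(4) by simp
  then show "TMul a (kp_star a) \<approx> TMul (kp_star a) a"
    using sT_sstT_mul_adjoint[OF assms(2-4)] sT_sstT_mul_adjoint[OF assms(3,2) assms(4)[symmetric]]
    unfolding a_def by (simp add: kp_star_sT kp_star_sstT) (metis keq_sym keq_trans)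
  show "\<forall>t\<in>kp_D G. TMul a t \<approx> TMul t a"
    unfolding a_def using commutes_kp_D[OF sT_sstT_commutes_Proj[OF assms(1-4)]] by blast
qed

end

text \<open>In \<open>proposition4p1\<close> the coefficient ring of condition (1) is independent of that of
  \<open>a\<close> in condition (2), so each condition is compared with \<open>tails_agree\<close> for its own ring.\<close>

context row_finite_k_graph
begin

lemma Proj_comp_eq_iff_tails_agree:
  assumes "\<alpha> \<in> paths G" "\<beta> \<in> paths G" "src G \<alpha> = src G \<beta>"
  shows "(\<forall>\<gamma>\<in>paths G. rng G \<gamma> = src G \<alpha> \<longrightarrow>
           TMul (sT G (comp G \<alpha> \<gamma>)) (sstT G (comp G \<alpha> \<gamma>)) \<approx>
           (TMul (sT G (comp G \<beta> \<gamma>)) (sstT G (comp G \<beta> \<gamma>)) :: ('v, 'a, 'r::comm_ring_1) kpterm))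
         \<longleftrightarrow> tails_agree \<alpha> \<beta>"
proof -
  interpret row_finite_kumjian_pask k G "TYPE('r)" by intro_locales
  show ?thesis
    using tails_agree_if_Proj_eq[OF assms] Proj_comp_eq_if_tails_agree[OF _ assms] by blast
qed

lemma normal_commuting_iff_tails_agree:
  assumes "\<alpha> \<in> paths G" "\<beta> \<in> paths G" "src G \<alpha> = src G \<beta>"
  defines "a \<equiv> TMul (sT G \<alpha>) (sstT G \<beta>) :: ('v, 'a, 'r::comm_ring_1) kpterm"
  shows "(TMul a (kp_star a) \<approx> TMul (kp_star a) a \<and> (\<forall>t\<in>kp_D G. TMul a t \<approx> TMul t a))
         \<longleftrightarrow> tails_agree \<alpha> \<beta>"
proof -
  interpret row_finite_kumjian_pask k G "TYPE('r)" by intro_locales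
  show ?thesis
    using normal_commuting_if_tails_agree[OF _ assms(1-3)]
      Proj_comp_eq_if_normal_commuting[OF assms(1-3)]
      tails_agree_if_Proj_eq[OF assms(1-3)] unfolding a_def by blast
qed

end

theorem proposition4p1:
  fixes k :: nat and G :: "('v, 'a) kgraph" and \<alpha> \<beta> :: 'a
  assumes "is_kgraph k G" and "row_finite_no_sources k G"
    and "\<alpha> \<in> paths G" and "\<beta> \<in> paths G" and "src G \<alpha> = src G \<beta>"
  defines "a \<equiv> (TMul (sT G \<alpha>) (sstT G \<beta>) :: ('v, 'a, 'r::comm_ring_1) kpterm)"
  shows "((\<forall>\<gamma>\<in>paths G. rng G \<gamma> = src G \<alpha> \<longrightarrow>
             kp_eq k G (TMul (sT G (comp G \<alpha> \<gamma>)) (sstT G (comp G \<alpha> \<gamma>)))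
                       (TMul (sT G (comp G \<beta> \<gamma>)) (sstT G (comp G \<beta> \<gamma>))))
          \<longleftrightarrow>
          (kp_eq k G (TMul a (kp_star a)) (TMul (kp_star a) a) \<and>
           (\<forall>t\<in>kp_D G. kp_eq k G (TMul a t) (TMul t a))))
       \<and>
         ((kp_eq k G (TMul a (kp_star a)) (TMul (kp_star a) a) \<and>
           (\<forall>t\<in>kp_D G. kp_eq k G (TMul a t) (TMul t a)))
          \<longleftrightarrow>
          (\<forall>\<gamma>. inf_path k G \<gamma> \<and> inf_rng G \<gamma> = src G \<alpha> \<longrightarrow>
             inf_eq k (inf_concat k G \<alpha> \<gamma>) (inf_concat k G \<beta> \<gamma>)))"
proof -
  interpret row_finite_k_graph k G
    using assms(1,2) by (simp add: row_finite_k_graph_def k_graph_def row_finite_k_graph_axioms_def)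
  show ?thesis
    unfolding a_def Proj_comp_eq_iff_tails_agree[OF assms(3-5)]
      normal_commuting_iff_tails_agree[OF assms(3-5)] tails_agree_iff[OF assms(3-5)]
    by simp
qed

end
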